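(* There is an absolute constant $C$ such that for every finite graph $G$, \[\mathrm{rw}(G)\le 3\,\mathrm{fw}_\infty(G)+1\le C\cdot 2^{\mathrm{rw}(G)}+C.\] In particular, a class $\mathcal C$ of graphs has bounded rank-width if and only if $\sup_{G\in\mathcal C}\mathrm{fw}_\infty(G)<\infty$.
   Context: Graphs are finite, simple, undirected. For a bipartition $V(G)=A\uplus B$, the cut-rank $\mathrm{rk}_G(A,B)$ is the rank over the two-element field of the $A\times B$ $0/1$ matrix whose $(a,b)$ entry is $1$ iff $ab\in E(G)$. The rank-width $\mathrm{rw}(G)$ is the least $k$ such that there is a tree whose inner nodes have degree at most $3$ and whose leaves are the vertices of $G$ such that for every tree edge $e$, the bipartition of $V(G)$ into leaves on the two sides of $e$ has cut-rank at most $k$ (graphs with at most one vertex have rank-width $0$). Flipping sets $X,Y$ inverts adjacency of all pairs of distinct $x\in X,y\in Y$; a $k$-flip of $G$ is obtained by choosing a partition $\mathcal P$ of $V(G)$ with at most $k$ parts and flipping some pairs of (possibly equal) parts. Flipper game of radius $\infty$ and width $k$: $G_0=G$, runner chooses $v_0$; in round $i\ge1$ the flipper announces a $k$-flip $G_i$ of $G$, and the runner moves from $v_{i-1}$ to any vertex $v_i$ in the same connected component of $G_{i-1}$; the flipper wins if $v_i$ is isolated in $G_i$. $\mathrm{fw}_\infty(G)$ is the least $k$ for which the flipper has a winning strategy. *)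

theory Defs
  imports Complex_Main "HOL-Library.Disjoint_Sets"
begin

definition graph :: "'a set \<Rightarrow> ('a \<Rightarrow> 'a \<Rightarrow> bool) \<Rightarrow> bool" where
  "graph V E \<longleftrightarrow> finite V \<and> (\<forall>x y. E x y \<longrightarrow> x \<in> V \<and> y \<in> V)
     \<and> (\<forall>x y. E x y \<longrightarrow> E y x) \<and> (\<forall>x. \<not> E x x)"

text \<open>Rows S (indexed by vertices of A) of the A x B adjacency matrix are linearly
independent over GF(2): no nonempty subset of them sums to zero.\<close>
definition gf2_indep :: "('a \<Rightarrow> 'a \<Rightarrow> bool) \<Rightarrow> 'a set \<Rightarrow> 'a set \<Rightarrow> bool" where
  "gf2_indep E S B \<longleftrightarrow>
     (\<forall>S'. S' \<subseteq> S \<longrightarrow> S' \<noteq> {} \<longrightarrow> (\<exists>b\<in>B. odd (card {a\<in>S'. E a b})))"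

definition cutrank :: "('a \<Rightarrow> 'a \<Rightarrow> bool) \<Rightarrow> 'a set \<Rightarrow> 'a set \<Rightarrow> nat" where
  "cutrank E A B = Max {card S | S. S \<subseteq> A \<and> gf2_indep E S B}"

definition del_edge :: "('b \<Rightarrow> 'b \<Rightarrow> bool) \<Rightarrow> 'b \<Rightarrow> 'b \<Rightarrow> 'b \<Rightarrow> 'b \<Rightarrow> bool" where
  "del_edge T x y = (\<lambda>a b. T a b \<and> {a, b} \<noteq> {x, y})"

definition is_tree :: "'b set \<Rightarrow> ('b \<Rightarrow> 'b \<Rightarrow> bool) \<Rightarrow> bool" where
  "is_tree N T \<longleftrightarrow> finite N \<and> N \<noteq> {} \<and> graph N T
     \<and> (\<forall>x\<in>N. \<forall>y\<in>N. T\<^sup>*\<^sup>* x y)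
     \<and> (\<forall>x y. T x y \<longrightarrow> \<not> (del_edge T x y)\<^sup>*\<^sup>* x y)"

definition tdeg :: "('b \<Rightarrow> 'b \<Rightarrow> bool) \<Rightarrow> 'b \<Rightarrow> nat" where
  "tdeg T x = card {y. T x y}"

definition rank_decomp ::
  "'a set \<Rightarrow> ('a \<Rightarrow> 'a \<Rightarrow> bool) \<Rightarrow> nat \<Rightarrow> nat set \<Rightarrow> (nat \<Rightarrow> nat \<Rightarrow> bool) \<Rightarrow> ('a \<Rightarrow> nat) \<Rightarrow> bool" where
  "rank_decomp V E k N T L \<longleftrightarrow> is_tree N T
     \<and> (\<forall>x\<in>N. tdeg T x \<noteq> 1 \<longrightarrow> tdeg T x \<le> 3)
     \<and> bij_betw L V {x\<in>N. tdeg T x = 1}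
     \<and> (\<forall>u w. T u w \<longrightarrow>
          (let A = {v\<in>V. (del_edge T u w)\<^sup>*\<^sup>* u (L v)} in cutrank E A (V - A) \<le> k))"

definition rw :: "'a set \<Rightarrow> ('a \<Rightarrow> 'a \<Rightarrow> bool) \<Rightarrow> nat" where
  "rw V E = (if card V \<le> 1 then 0
             else (LEAST k. \<exists>N T L. rank_decomp V E k N T L))"

definition kflip :: "nat \<Rightarrow> 'a set \<Rightarrow> ('a \<Rightarrow> 'a \<Rightarrow> bool) \<Rightarrow> ('a \<Rightarrow> 'a \<Rightarrow> bool) \<Rightarrow> bool" where
  "kflip k V E H \<longleftrightarrow> (\<exists>P F. partition_on V P \<and> card P \<le> k \<and> (\<forall>X Y. F X Y = F Y X)
     \<and> H = (\<lambda>x y. x \<in> V \<and> y \<in> V \<and> x \<noteq> y \<and>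
               (E x y \<noteq> (\<exists>X\<in>P. \<exists>Y\<in>P. x \<in> X \<and> y \<in> Y \<and> F X Y))))"

text \<open>Flipper strategy: maps the history of runner positions [v_0,...,v_(i-1)] to the
announced k-flip G_i.  Graph at stage j of a play v.\<close>
definition stage :: "('a \<Rightarrow> 'a \<Rightarrow> bool) \<Rightarrow> ('a list \<Rightarrow> 'a \<Rightarrow> 'a \<Rightarrow> bool) \<Rightarrow> (nat \<Rightarrow> 'a) \<Rightarrow> nat \<Rightarrow> 'a \<Rightarrow> 'a \<Rightarrow> bool" where
  "stage E \<sigma> v j = (if j = 0 then E else \<sigma> (map v [0..<j]))"

definition flipper_wins :: "nat \<Rightarrow> 'a set \<Rightarrow> ('a \<Rightarrow> 'a \<Rightarrow> bool) \<Rightarrow> bool" where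
  "flipper_wins k V E \<longleftrightarrow> (\<exists>\<sigma>. (\<forall>h. kflip k V E (\<sigma> h)) \<and>
     (\<forall>v :: nat \<Rightarrow> 'a. v 0 \<in> V \<and> (\<forall>j. (stage E \<sigma> v j)\<^sup>*\<^sup>* (v j) (v (Suc j)))
        \<longrightarrow> (\<exists>i\<ge>1. \<not> (\<exists>u. stage E \<sigma> v i (v i) u))))"

definition fw :: "'a set \<Rightarrow> ('a \<Rightarrow> 'a \<Rightarrow> bool) \<Rightarrow> nat" where
  "fw V E = (LEAST k. flipper_wins k V E)"

end

theory Submission
  imports Defs
begin

text \<open>If the flipper wins with width \<open>k\<close>, then for every set \<open>W\<close> of \<open>2 k + 1\<close> vertices
  some \<open>k\<close>-flip leaves at most \<open>k\<close> vertices of \<open>W\<close> in each of its components: otherwise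
  the runner always stays in a component containing more than \<open>k\<close> of them, and two such
  components of different flips meet. Splitting off the vertices one at a time while keeping
  at most \<open>2 k\<close> columns that span the current cut, and splitting along such a balanced flip
  whenever this spanning set reaches \<open>2 k + 1\<close>, yields a decomposition of width
  \<open>3 k + 1\<close>.

  Conversely, given a rank decomposition of width \<open>r\<close>, the flipper stands on a node \<open>x\<close>
  of the tree. Classifying the vertices by their side of \<open>x\<close> and their neighbourhood outside
  it gives at most \<open>3 \<cdot> 2 ^ r\<close> classes, and flipping between classes removes exactly the
  edges between different sides. So the runner is confined to one branch at \<open>x\<close>, the
  flipper steps into it, and the branches shrink until the runner sits isolated on its leaf.\<close>

section \<open>Cut-rank over GF(2)\<close>

text \<open>Coefficients are natural numbers, read modulo 2.\<close>
definition gf2_spans :: "('a \<Rightarrow> 'a \<Rightarrow> bool) \<Rightarrow> 'a set \<Rightarrow> 'a set \<Rightarrow> 'a \<Rightarrow> bool" where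
  "gf2_spans E A W c \<longleftrightarrow>
     (\<exists>f::'a \<Rightarrow> nat. \<forall>t\<in>A. E t c \<longleftrightarrow> odd (\<Sum>q\<in>W. f q * of_bool (E t q)))"

lemma even_sum_cong:
  assumes "finite D" "\<And>a. a \<in> D \<Longrightarrow> even (g a) \<longleftrightarrow> even (h a)"
  shows "even (sum g D :: nat) \<longleftrightarrow> even (sum h D)"
proof -
  have "{a\<in>D. odd (g a)} = {a\<in>D. odd (h a)}" using assms(2) by blast
  then show ?thesis by (simp add: even_sum_iff[OF assms(1)])
qed

lemma gf2_spans_column:
  assumes "finite W" "r \<in> W" "\<forall>t\<in>A. E t c = E t r"
  shows "gf2_spans E A W c"
  unfolding gf2_spans_def
proof (intro exI ballI)
  fix t assume "t \<in> A"
  have "W \<inter> {q. q = r} = {r}" using assms(2) by blast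
  then have "(\<Sum>q\<in>W. of_bool (q = r) * of_bool (E t q)) = (of_bool (E t r) :: nat)"
    using assms(1) by simp
  then show "E t c \<longleftrightarrow> odd (\<Sum>q\<in>W. of_bool (q = r) * of_bool (E t q) :: nat)"
    using assms(3) \<open>t \<in> A\<close> by simp
qed

lemma gf2_spans_subset_rows: "A' \<subseteq> A \<Longrightarrow> gf2_spans E A W c \<Longrightarrow> gf2_spans E A' W c"
  unfolding gf2_spans_def by blast

lemma gf2_spans_trans:
  assumes finW: "finite W" and spanned: "\<forall>q\<in>W. gf2_spans E A W' q" and c: "gf2_spans E A W c"
  shows "gf2_spans E A W' c"
proof -
  obtain f :: "'a \<Rightarrow> nat" where f: "\<forall>t\<in>A. E t c \<longleftrightarrow> odd (\<Sum>q\<in>W. f q * of_bool (E t q))"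
    using c unfolding gf2_spans_def by blast
  have "\<forall>q\<in>W. \<exists>g::'a \<Rightarrow> nat. \<forall>t\<in>A. E t q \<longleftrightarrow> odd (\<Sum>q'\<in>W'. g q' * of_bool (E t q'))"
    using spanned unfolding gf2_spans_def by blast
  then obtain g :: "'a \<Rightarrow> 'a \<Rightarrow> nat"
    where g: "\<forall>q\<in>W. \<forall>t\<in>A. E t q \<longleftrightarrow> odd (\<Sum>q'\<in>W'. g q q' * of_bool (E t q'))"
    by (auto dest!: bchoice)
  have "E t c \<longleftrightarrow> odd (\<Sum>q'\<in>W'. (\<Sum>q\<in>W. f q * g q q') * of_bool (E t q'))" if t: "t \<in> A" for t
  proof -
    have "even (\<Sum>q\<in>W. f q * of_bool (E t q))
        \<longleftrightarrow> even (\<Sum>q\<in>W. f q * (\<Sum>q'\<in>W'. g q q' * of_bool (E t q')))"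
    proof (rule even_sum_cong[OF finW])
      fix q assume "q \<in> W"
      then have "E t q \<longleftrightarrow> odd (\<Sum>q'\<in>W'. g q q' * of_bool (E t q'))" using g t by blast
      then show "even (f q * of_bool (E t q)) \<longleftrightarrow> even (f q * (\<Sum>q'\<in>W'. g q q' * of_bool (E t q')))"
        by simp
    qed
    also have "(\<Sum>q\<in>W. f q * (\<Sum>q'\<in>W'. g q q' * of_bool (E t q')))
        = (\<Sum>q'\<in>W'. (\<Sum>q\<in>W. f q * g q q') * of_bool (E t q'))"
      by (simp add: sum_distrib_left sum_distrib_right mult.assoc sum.swap[of _ W])
    finally show ?thesis using f t by simp
  qed
  then have "\<forall>t\<in>A. E t c \<longleftrightarrow> odd (\<Sum>q'\<in>W'. (\<Sum>q\<in>W. f q * g q q') * of_bool (E t q'))"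
    by blast
  then show ?thesis unfolding gf2_spans_def by (rule exI[of _ "\<lambda>q'. \<Sum>q\<in>W. f q * g q q'"])
qed

lemma even_card_symdiff:
  assumes "finite S1" "finite S2"
  shows "even (card {a \<in> (S1 - S2) \<union> (S2 - S1). P a})
    \<longleftrightarrow> (odd (card {a\<in>S1. P a}) \<longleftrightarrow> odd (card {a\<in>S2. P a}))"
proof -
  let ?X1 = "{a\<in>S1 - S2. P a}" and ?X2 = "{a\<in>S2 - S1. P a}" and ?Y = "{a\<in>S1 \<inter> S2. P a}"
  have "{a\<in>S1. P a} = ?X1 \<union> ?Y" "{a\<in>S2. P a} = ?X2 \<union> ?Y"
    "{a \<in> (S1 - S2) \<union> (S2 - S1). P a} = ?X1 \<union> ?X2" by auto
  moreover have "finite ?X1" "finite ?X2" "finite ?Y" using assms by auto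
  ultimately have "card {a\<in>S1. P a} = card ?X1 + card ?Y" "card {a\<in>S2. P a} = card ?X2 + card ?Y"
    "card {a \<in> (S1 - S2) \<union> (S2 - S1). P a} = card ?X1 + card ?X2"
    by (auto intro: card_Un_disjoint)
  then show ?thesis by auto
qed

lemma even_card_if_gf2_spans:
  assumes "finite D" "D \<subseteq> A" "gf2_spans E A W b" "\<forall>q\<in>W. even (card {a\<in>D. E a q})"
  shows "even (card {a\<in>D. E a b})"
proof -
  obtain f :: "'a \<Rightarrow> nat" where f: "\<forall>t\<in>A. E t b \<longleftrightarrow> odd (\<Sum>q\<in>W. f q * of_bool (E t q))"
    using assms(3) unfolding gf2_spans_def by blast
  have "even (card {a\<in>D. E a b}) \<longleftrightarrow> even (\<Sum>a\<in>D. of_bool (E a b) :: nat)"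
    using assms(1) by (simp add: Int_def)
  also have "\<dots> \<longleftrightarrow> even (\<Sum>a\<in>D. \<Sum>q\<in>W. f q * of_bool (E a q))"
    using f assms(2) by (intro even_sum_cong[OF assms(1)]) auto
  also have "(\<Sum>a\<in>D. \<Sum>q\<in>W. f q * of_bool (E a q)) = (\<Sum>q\<in>W. f q * card {a\<in>D. E a q})"
    using assms(1) by (subst sum.swap) (simp add: sum_distrib_left Int_def mult.commute)
  finally show ?thesis using assms(4) by (simp add: dvd_sum)
qed

lemma gf2_indep_empty: "gf2_indep E {} B"
  by (simp add: gf2_indep_def)

lemma finite_card_gf2_indep: "finite A \<Longrightarrow> finite {card S |S. S \<subseteq> A \<and> gf2_indep E S B}"
  by (rule finite_subset[of _ "card ` Pow A"]) auto

lemma cutrank_leI: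
  assumes "finite A" "\<And>S. S \<subseteq> A \<Longrightarrow> gf2_indep E S B \<Longrightarrow> card S \<le> n"
  shows "cutrank E A B \<le> n"
  unfolding cutrank_def
  using assms finite_card_gf2_indep[OF assms(1), of E B] gf2_indep_empty[of E B]
  by (subst Max_le_iff) auto

lemma card_le_cutrank:
  assumes "finite A" "S \<subseteq> A" "gf2_indep E S B"
  shows "card S \<le> cutrank E A B"
  unfolding cutrank_def using assms finite_card_gf2_indep[OF assms(1), of E B]
  by (intro Max_ge) auto

lemma cutrank_basis:
  assumes "finite A"
  obtains S where "S \<subseteq> A" "gf2_indep E S B" "card S = cutrank E A B"
proof -
  have "cutrank E A B \<in> {card S |S. S \<subseteq> A \<and> gf2_indep E S B}"
    unfolding cutrank_def using finite_card_gf2_indep[OF assms, of E B] gf2_indep_empty[of E B]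
    by (intro Max_in) auto
  then obtain S where "S \<subseteq> A" "gf2_indep E S B" "card S = cutrank E A B" by auto
  then show ?thesis by (rule that)
qed

lemma cutrank_le_card:
  assumes "finite A"
  shows "cutrank E A B \<le> card A"
  by (rule cutrank_leI[OF assms]) (rule card_mono[OF assms])

text \<open>Pigeonhole: with more independent rows than spanning columns, two distinct sets of
  rows have the same parities on \<open>W\<close>; their symmetric difference then has even parity on
  every spanned column, contradicting independence.\<close>
lemma cutrank_le_card_if_gf2_spans:
  assumes finA: "finite A" and finW: "finite W" and span: "\<And>c. c \<in> B \<Longrightarrow> gf2_spans E A W c"
  shows "cutrank E A B \<le> card W"
proof (rule cutrank_leI[OF finA], rule ccontr)
  fix S assume S: "S \<subseteq> A" "gf2_indep E S B" and "\<not> card S \<le> card W"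
  then have finS: "finite S" and lt: "card W < card S" using finA finite_subset by auto
  define g where "g S' = {q\<in>W. odd (card {a\<in>S'. E a q})}" for S'
  have "\<not> inj_on g (Pow S)"
  proof
    assume "inj_on g (Pow S)"
    then have "card (Pow S) \<le> card (Pow W)"
      using finW by (intro card_inj_on_le) (auto simp: g_def)
    then show False using finS finW lt by (simp add: card_Pow)
  qed
  then obtain S1 S2 where S12: "S1 \<subseteq> S" "S2 \<subseteq> S" "S1 \<noteq> S2" "g S1 = g S2"
    unfolding inj_on_def by auto
  define D where "D = (S1 - S2) \<union> (S2 - S1)"
  have D: "D \<subseteq> S" "D \<noteq> {}" "finite D" using S12 finS by (auto simp: D_def intro: finite_subset)
  have "even (card {a\<in>D. E a q})" if "q \<in> W" for q
  proof -
    have "q \<in> g S1 \<longleftrightarrow> q \<in> g S2" using S12 by simp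
    then show ?thesis
      using that S12(1,2) finS even_card_symdiff[of S1 S2 "\<lambda>a. E a q"]
      by (auto simp: g_def D_def intro: finite_subset)
  qed
  moreover obtain b where "b \<in> B" "odd (card {a\<in>D. E a b})"
    using S(2) D unfolding gf2_indep_def by blast
  ultimately show False
    using even_card_if_gf2_spans[OF D(3) _ span] D(1) S(1) by blast
qed

lemma row_sum_of_basis:
  assumes finA: "finite A" and S: "S \<subseteq> A" "gf2_indep E S B" "card S = cutrank E A B"
    and a: "a \<in> A"
  obtains S' where "S' \<subseteq> S" "\<forall>b\<in>B. E a b \<longleftrightarrow> odd (card {s\<in>S'. E s b})"
proof (cases "a \<in> S")
  case True
  then show ?thesis using that[of "{a}"] by (auto simp: Collect_conv_if)
next
  case False
  have finS: "finite S" using S(1) finA finite_subset by blast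
  then have "\<not> gf2_indep E (insert a S) B"
    using card_le_cutrank[OF finA, of "insert a S" E B] S a False by auto
  then obtain S'' where S'': "S'' \<subseteq> insert a S" "S'' \<noteq> {}" "\<forall>b\<in>B. even (card {s\<in>S''. E s b})"
    unfolding gf2_indep_def by auto
  have "a \<in> S''" using S(2) S'' unfolding gf2_indep_def by blast
  define S' where "S' = S'' - {a}"
  have S'S: "S' \<subseteq> S" using S''(1) by (auto simp: S'_def)
  have "{s\<in>S''. E s b} = (if E a b then insert a {s\<in>S'. E s b} else {s\<in>S'. E s b})" for b
    using \<open>a \<in> S''\<close> by (auto simp: S'_def)
  moreover have "finite S'" using S'S finS finite_subset by blast
  ultimately have "E a b \<longleftrightarrow> odd (card {s\<in>S'. E s b})" if "b \<in> B" for b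
    using S''(3) that by (auto simp: S'_def split: if_splits)
  then show ?thesis using that S'S by blast
qed

lemma card_rows_le_pow_cutrank:
  assumes finA: "finite A"
  shows "card ((\<lambda>a. {b\<in>B. E a b}) ` A) \<le> 2 ^ cutrank E A B"
proof -
  obtain S where S: "S \<subseteq> A" "gf2_indep E S B" "card S = cutrank E A B"
    using cutrank_basis[OF finA] by blast
  have finS: "finite S" using S(1) finA finite_subset by blast
  define h where "h S' = {b\<in>B. odd (card {s\<in>S'. E s b})}" for S'
  have "(\<lambda>a. {b\<in>B. E a b}) ` A \<subseteq> h ` Pow S"
  proof
    fix x assume "x \<in> (\<lambda>a. {b\<in>B. E a b}) ` A"
    then obtain a where a: "a \<in> A" "x = {b\<in>B. E a b}" by blast
    obtain S' where "S' \<subseteq> S" "\<forall>b\<in>B. E a b \<longleftrightarrow> odd (card {s\<in>S'. E s b})"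
      using row_sum_of_basis[OF finA S a(1)] by blast
    then show "x \<in> h ` Pow S" using a(2) unfolding h_def by blast
  qed
  then have "card ((\<lambda>a. {b\<in>B. E a b}) ` A) \<le> card (h ` Pow S)"
    using finS by (intro card_mono) auto
  also have "\<dots> \<le> card (Pow S)" using finS by (intro card_image_le) auto
  also have "\<dots> = 2 ^ cutrank E A B" using finS S(3) by (simp add: card_Pow)
  finally show ?thesis .
qed

lemma cutrank_commute_le:
  assumes finA: "finite A" and finB: "finite B" and sym: "symp E"
  shows "cutrank E B A \<le> cutrank E A B"
proof -
  obtain S where S: "S \<subseteq> A" "gf2_indep E S B" "card S = cutrank E A B"
    using cutrank_basis[OF finA] by blast
  have finS: "finite S" using S(1) finA finite_subset by blast
  have "gf2_spans E B S c" if c: "c \<in> A" for c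
  proof -
    obtain S' where S': "S' \<subseteq> S" "\<forall>b\<in>B. E c b \<longleftrightarrow> odd (card {s\<in>S'. E s b})"
      using row_sum_of_basis[OF finA S c] by blast
    have "S \<inter> {q. q \<in> S'} = S'" using S'(1) by blast
    then have sum_eq: "(\<Sum>q\<in>S. of_bool (q \<in> S') * of_bool (E t q)) = card {s\<in>S'. E t s}" for t
      using finS finite_subset[OF S'(1) finS] by (simp add: Int_def)
    have "\<forall>t\<in>B. E t c \<longleftrightarrow> odd (\<Sum>q\<in>S. of_bool (q \<in> S') * of_bool (E t q) :: nat)"
    proof
      fix t assume "t \<in> B"
      moreover have "{s\<in>S'. E t s} = {s\<in>S'. E s t}" "E t c = E c t"
        using sym by (auto dest: sympD)
      ultimately have "E t c \<longleftrightarrow> odd (card {s\<in>S'. E t s})" using S'(2) by simp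
      then show "E t c \<longleftrightarrow> odd (\<Sum>q\<in>S. of_bool (q \<in> S') * of_bool (E t q) :: nat)"
        by (simp only: sum_eq)
    qed
    then show ?thesis unfolding gf2_spans_def by (rule exI[of _ "\<lambda>q. of_bool (q \<in> S')"])
  qed
  then have "cutrank E B A \<le> card S" by (rule cutrank_le_card_if_gf2_spans[OF finB finS])
  then show ?thesis using S(3) by simp
qed

lemma cutrank_commute:
  "finite A \<Longrightarrow> finite B \<Longrightarrow> symp E \<Longrightarrow> cutrank E B A = cutrank E A B"
  using cutrank_commute_le[of A B E] cutrank_commute_le[of B A E] by simp

section \<open>Flips and spanning sets of cuts\<close>

definition flipped ::
  "'a set \<Rightarrow> ('a \<Rightarrow> 'a \<Rightarrow> bool) \<Rightarrow> 'a set set \<Rightarrow> ('a set \<Rightarrow> 'a set \<Rightarrow> bool) \<Rightarrow> 'a \<Rightarrow> 'a \<Rightarrow> bool" where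
  "flipped V E P F = (\<lambda>x y. x \<in> V \<and> y \<in> V \<and> x \<noteq> y \<and>
     (E x y \<noteq> (\<exists>X\<in>P. \<exists>Y\<in>P. x \<in> X \<and> y \<in> Y \<and> F X Y)))"

lemma kflip_iff:
  "kflip k V E H \<longleftrightarrow>
     (\<exists>P F. partition_on V P \<and> card P \<le> k \<and> (\<forall>X Y. F X Y = F Y X) \<and> H = flipped V E P F)"
  by (simp add: kflip_def flipped_def)

lemma kflip_in_V: "kflip k V E H \<Longrightarrow> H x y \<Longrightarrow> x \<in> V \<and> y \<in> V"
  by (auto simp: kflip_iff flipped_def)

lemma kflip_rtranclp_in_V:
  assumes "kflip k V E H" "H\<^sup>*\<^sup>* x y" "x \<in> V"
  shows "y \<in> V"
  using assms(2,3) by (induction rule: rtranclp_induct) (auto dest: kflip_in_V[OF assms(1)])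

locale finite_graph =
  fixes V :: "'a set" and E :: "'a \<Rightarrow> 'a \<Rightarrow> bool"
  assumes graph: "graph V E"
begin

lemma finite_V: "finite V"
  using graph by (simp add: graph_def)

lemma E_commute: "E x y \<longleftrightarrow> E y x"
  using graph unfolding graph_def by blast

lemma symp_E: "symp E"
  using E_commute by (simp add: symp_def)

lemma E_in_V: "E x y \<Longrightarrow> x \<in> V \<and> y \<in> V"
  using graph unfolding graph_def by blast

lemma E_irrefl: "\<not> E x x"
  using graph unfolding graph_def by blast

lemma rtranclp_E_in_V: "E\<^sup>*\<^sup>* a b \<Longrightarrow> a \<in> V \<Longrightarrow> b \<in> V"
  by (induction rule: rtranclp_induct) (auto dest: E_in_V)

lemma kflip_symp:
  assumes "kflip k V E H"
  shows "symp H"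
proof -
  obtain P F where F: "\<forall>X Y. F X Y = F Y X" and H: "H = flipped V E P F"
    using assms unfolding kflip_iff by blast
  have swap: "(\<exists>X\<in>P. \<exists>Y\<in>P. x \<in> X \<and> y \<in> Y \<and> F X Y) \<longleftrightarrow> (\<exists>X\<in>P. \<exists>Y\<in>P. y \<in> X \<and> x \<in> Y \<and> F X Y)"
    for x y using F by blast
  have "H x y \<Longrightarrow> H y x" for x y
    unfolding H flipped_def using swap[of x y] E_commute[of x y] by auto
  then show ?thesis by (rule sympI)
qed

lemma kflip_component_eq:
  assumes "kflip k V E H" "H\<^sup>*\<^sup>* x y"
  shows "{z. H\<^sup>*\<^sup>* x z} = {z. H\<^sup>*\<^sup>* y z}"
proof -
  have "H\<^sup>*\<^sup>* y x" using symp_rtranclp[OF kflip_symp[OF assms(1)]] assms(2) by (blast dest: sympD)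
  then show ?thesis using assms(2) by (auto intro: rtranclp_trans)
qed

lemma kflip_self: "V \<noteq> {} \<Longrightarrow> 1 \<le> k \<Longrightarrow> kflip k V E E"
  unfolding kflip_iff flipped_def
  using partition_on_space[of V] E_in_V E_irrefl
  by (intro exI[of _ "{V}"] exI[of _ "\<lambda>_ _. False"]) (auto intro!: ext)

lemma kflip_discrete: "kflip (card V) V E (\<lambda>_ _. False)"
  unfolding kflip_iff flipped_def
proof (intro exI[of _ "(\<lambda>v. {v}) ` V"] exI[of _ "\<lambda>X Y. \<exists>x\<in>X. \<exists>y\<in>Y. E x y"] conjI)
  show "partition_on V ((\<lambda>v. {v}) ` V)" by (rule partition_on_singletons)
  show "card ((\<lambda>v. {v}) ` V) \<le> card V" by (rule card_image_le[OF finite_V])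
  show "\<forall>X Y. (\<exists>x\<in>X. \<exists>y\<in>Y. E x y) = (\<exists>x\<in>Y. \<exists>y\<in>X. E x y)" using E_commute by blast
qed auto

text \<open>No flipped edge leaves \<open>Z\<close>, so across \<open>Z\<close> the flip exactly cancels the adjacency,
  which therefore only depends on the parts.\<close>
lemma flipped_closed_columns_agree:
  assumes P: "partition_on V P" "X \<in> P" and c: "c \<in> X - Z" "c' \<in> X - Z"
    and Z: "t \<in> Z" "Z \<subseteq> V" "\<And>u w. u \<in> Z \<Longrightarrow> flipped V E P F u w \<Longrightarrow> w \<in> Z"
  shows "E t c = E t c'"
proof -
  have "E t y \<longleftrightarrow> (\<exists>X'\<in>P. t \<in> X' \<and> F X' X)" if y: "y \<in> X - Z" for y
  proof -
    have "y \<in> V" using y P partition_onD1 by blast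
    moreover have "\<not> flipped V E P F t y" using Z y by blast
    moreover have "Y = X" if "Y \<in> P" "y \<in> Y" for Y
      using P y that partition_onD2[OF P(1)] by (auto simp: disjoint_def)
    ultimately show ?thesis using Z y P(2) unfolding flipped_def by blast
  qed
  then show ?thesis using c by blast
qed

text \<open>The invariant of the construction of decompositions from balanced flips.\<close>
definition spans_cut :: "'a set \<Rightarrow> 'a set \<Rightarrow> bool" where
  "spans_cut T W \<longleftrightarrow> T \<subseteq> V \<and> W \<subseteq> V - T \<and> finite W \<and> (\<forall>c\<in>V - T. gf2_spans E T W c)"

lemma cutrank_le_card_if_spans_cut: "spans_cut T W \<Longrightarrow> cutrank E T (V - T) \<le> card W"
  unfolding spans_cut_def
  by (rule cutrank_le_card_if_gf2_spans) (auto intro: finite_subset[OF _ finite_V])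

lemma spans_cut_V: "spans_cut V {}"
  by (simp add: spans_cut_def)

lemma spans_cut_Diff_insert:
  assumes "spans_cut T W" "v \<in> T"
  shows "spans_cut (T - {v}) (insert v W)"
  unfolding spans_cut_def
proof (intro conjI ballI)
  show "T - {v} \<subseteq> V" "insert v W \<subseteq> V - (T - {v})" and fin: "finite (insert v W)"
    using assms by (auto simp: spans_cut_def)
  fix c assume c: "c \<in> V - (T - {v})"
  show "gf2_spans E (T - {v}) (insert v W) c"
  proof (cases "c = v")
    case True
    then show ?thesis by (intro gf2_spans_column[OF fin, of v]) auto
  next
    case False
    then have "gf2_spans E (T - {v}) W c"
      using assms(1) c gf2_spans_subset_rows[of "T - {v}" T] by (auto simp: spans_cut_def)
    moreover have "\<forall>q\<in>W. gf2_spans E (T - {v}) (insert v W) q"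
      using fin by (auto intro: gf2_spans_column)
    ultimately show ?thesis using gf2_spans_trans assms(1) by (auto simp: spans_cut_def)
  qed
qed

lemma flipped_closed_representatives:
  assumes P: "partition_on V P" "card P \<le> k"
    and Z: "Z \<subseteq> V" "\<And>u w. u \<in> Z \<Longrightarrow> flipped V E P F u w \<Longrightarrow> w \<in> Z"
  obtains R where "R \<subseteq> V - Z" "card R \<le> k" "finite R" "\<forall>c\<in>V - Z. \<exists>r\<in>R. \<forall>t\<in>Z. E t c = E t r"
proof -
  define rep where "rep X = (SOME r. r \<in> X - Z)" for X
  define R where "R = rep ` {X\<in>P. X - Z \<noteq> {}}"
  have finP: "finite P" using finite_elements[OF finite_V P(1)] .
  have rep: "rep X \<in> X - Z" if ne: "X - Z \<noteq> {}" for X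
  proof -
    obtain r where "r \<in> X - Z" using ne by blast
    then show ?thesis unfolding rep_def by (rule someI)
  qed
  have "R \<subseteq> V - Z" using rep partition_onD1[OF P(1)] by (auto simp: R_def)
  moreover have "card R \<le> k"
  proof -
    have "card R \<le> card P"
      unfolding R_def using finP by (intro card_image_le[THEN order_trans] card_mono) auto
    then show ?thesis using P(2) by simp
  qed
  moreover have "finite R" unfolding R_def using finP by simp
  moreover have "\<forall>c\<in>V - Z. \<exists>r\<in>R. \<forall>t\<in>Z. E t c = E t r"
  proof
    fix c assume c: "c \<in> V - Z"
    obtain X where X: "X \<in> P" "c \<in> X" using c partition_onD1[OF P(1)] by blast
    then have "rep X \<in> X - Z" "rep X \<in> R" using c rep by (auto simp: R_def)
    moreover have "E t c = E t (rep X)" if "t \<in> Z" for t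
      by (rule flipped_closed_columns_agree[OF P(1) X(1) _ _ _ Z])
        (use c X that \<open>rep X \<in> X - Z\<close> in auto)
    ultimately show "\<exists>r\<in>R. \<forall>t\<in>Z. E t c = E t r" by blast
  qed
  ultimately show ?thesis using that by blast
qed

lemma spans_cut_Int_closed:
  assumes spans: "spans_cut T W" and P: "partition_on V P" "card P \<le> k"
    and Z: "Z \<subseteq> V" "\<And>u w. u \<in> Z \<Longrightarrow> flipped V E P F u w \<Longrightarrow> w \<in> Z"
  obtains R where "card R \<le> k" "spans_cut (T \<inter> Z) ((W \<inter> Z) \<union> R)"
proof -
  obtain R where R: "R \<subseteq> V - Z" "card R \<le> k" "finite R"
    and reps: "\<forall>c\<in>V - Z. \<exists>r\<in>R. \<forall>t\<in>Z. E t c = E t r"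
    by (rule flipped_closed_representatives[OF P Z])
  define W' where "W' = (W \<inter> Z) \<union> R"
  have finW: "finite W" using spans by (simp add: spans_cut_def)
  then have finW': "finite W'" using R(3) by (simp add: W'_def)
  have outside: "gf2_spans E (T \<inter> Z) W' c" if c: "c \<in> V - Z" for c
  proof -
    obtain r where "r \<in> R" "\<forall>t\<in>Z. E t c = E t r" using reps c by blast
    then show ?thesis by (intro gf2_spans_column[OF finW', of r]) (auto simp: W'_def)
  qed
  have "gf2_spans E (T \<inter> Z) W' c" if c: "c \<in> V - T \<inter> Z" for c
  proof (cases "c \<in> Z")
    case True
    then have "gf2_spans E (T \<inter> Z) W c"
      using spans c gf2_spans_subset_rows[of "T \<inter> Z" T] by (auto simp: spans_cut_def)
    moreover have "gf2_spans E (T \<inter> Z) W' q" if "q \<in> W" for q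
    proof (cases "q \<in> Z")
      case True
      then show ?thesis using that finW' by (intro gf2_spans_column[of W' q]) (auto simp: W'_def)
    next
      case False
      then show ?thesis using that spans outside by (auto simp: spans_cut_def)
    qed
    ultimately show ?thesis using gf2_spans_trans[of W E "T \<inter> Z" W' c] finW by blast
  qed (use c outside in blast)
  moreover have "W' \<subseteq> V - T \<inter> Z" using spans R(1) by (auto simp: W'_def spans_cut_def)
  ultimately have "spans_cut (T \<inter> Z) W'" using Z(1) finW' unfolding spans_cut_def by blast
  then show ?thesis using that R(2) unfolding W'_def by blast
qed

end

section \<open>Decomposition trees from balanced flips\<close>

datatype 'a ltree = Leaf 'a | Node "'a ltree" "'a ltree"

fun leaves :: "'a ltree \<Rightarrow> 'a set" where
  "leaves (Leaf v) = {v}"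
| "leaves (Node a b) = leaves a \<union> leaves b"

context finite_graph
begin

inductive decomp_tree :: "nat \<Rightarrow> 'a ltree \<Rightarrow> bool" for K where
  decomp_Leaf: "v \<in> V \<Longrightarrow> decomp_tree K (Leaf v)"
| decomp_Node: "decomp_tree K a \<Longrightarrow> decomp_tree K b \<Longrightarrow> leaves a \<inter> leaves b = {} \<Longrightarrow>
    cutrank E (leaves a \<union> leaves b) (V - (leaves a \<union> leaves b)) \<le> K \<Longrightarrow> decomp_tree K (Node a b)"

lemma decomp_tree_Union:
  assumes "finite \<K>" "\<K> \<noteq> {}" "disjoint \<K>"
    and "\<And>C. C \<in> \<K> \<Longrightarrow> \<exists>t. decomp_tree K t \<and> leaves t = C"
    and "\<And>\<K>'. \<K>' \<subseteq> \<K> \<Longrightarrow> \<K>' \<noteq> {} \<Longrightarrow> cutrank E (\<Union>\<K>') (V - \<Union>\<K>') \<le> K"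
  shows "\<exists>t. decomp_tree K t \<and> leaves t = \<Union>\<K>"
  using assms
proof (induction \<K> rule: finite_ne_induct)
  case (singleton C)
  then show ?case by simp
next
  case (insert C \<K>)
  obtain a where a: "decomp_tree K a" "leaves a = C" using insert.prems(2) by blast
  have "\<exists>b. decomp_tree K b \<and> leaves b = \<Union>\<K>"
  proof (rule insert.IH)
    show "disjoint \<K>" using insert.prems(1) by (simp add: pairwise_insert)
    show "\<exists>t. decomp_tree K t \<and> leaves t = C'" if "C' \<in> \<K>" for C'
      using insert.prems(2) that by blast
    show "cutrank E (\<Union>\<K>') (V - \<Union>\<K>') \<le> K" if "\<K>' \<subseteq> \<K>" "\<K>' \<noteq> {}" for \<K>'
      using insert.prems(3) that by blast
  qed
  then obtain b where b: "decomp_tree K b" "leaves b = \<Union>\<K>" by blast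
  have "leaves a \<inter> leaves b = {}"
    using insert.prems(1) insert.hyps a(2) b(2) by (fastforce simp: pairwise_insert disjnt_def)
  moreover have "cutrank E (leaves a \<union> leaves b) (V - (leaves a \<union> leaves b)) \<le> K"
    using insert.prems(3)[of "insert C \<K>"] a(2) b(2) by simp
  ultimately have "decomp_tree K (Node a b)" by (rule decomp_Node[OF a(1) b(1)])
  then show ?case using a(2) b(2) by (intro exI[of _ "Node a b"]) simp
qed

definition balanced_flip :: "nat \<Rightarrow> 'a set \<Rightarrow> ('a \<Rightarrow> 'a \<Rightarrow> bool) \<Rightarrow> bool" where
  "balanced_flip k W H \<longleftrightarrow> kflip k V E H \<and> (\<forall>x\<in>V. card (W \<inter> {y. H\<^sup>*\<^sup>* x y}) \<le> k)"

lemma spans_cut_Int_components: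
  assumes kflip: "kflip k V E H" and spans: "spans_cut T W" and X: "X \<subseteq> V"
  shows "\<exists>W'. card W' \<le> card (W \<inter> (\<Union>x\<in>X. {y. H\<^sup>*\<^sup>* x y})) + k
    \<and> spans_cut (T \<inter> (\<Union>x\<in>X. {y. H\<^sup>*\<^sup>* x y})) W'"
proof -
  obtain P F where P: "partition_on V P" "card P \<le> k" and H: "H = flipped V E P F"
    using kflip unfolding kflip_iff by blast
  let ?Z = "\<Union>x\<in>X. {y. H\<^sup>*\<^sup>* x y}"
  have sub: "?Z \<subseteq> V" using X kflip_rtranclp_in_V[OF kflip] by auto
  have closed: "w \<in> ?Z" if "u \<in> ?Z" "flipped V E P F u w" for u w
    using that H by (auto intro: rtranclp.rtrancl_into_rtrancl)
  obtain R where R: "card R \<le> k" "spans_cut (T \<inter> ?Z) ((W \<inter> ?Z) \<union> R)"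
    by (rule spans_cut_Int_closed[OF spans P sub closed])
  have "card ((W \<inter> ?Z) \<union> R) \<le> card (W \<inter> ?Z) + k"
    using card_Un_le[of "W \<inter> ?Z" R] R(1) by linarith
  then show ?thesis using R(2) by blast
qed

text \<open>One step of the construction: the components of a balanced flip cut \<open>T\<close> into pieces
  that are spanned by at most \<open>2 k\<close> columns each, and every union of pieces by at most
  \<open>3 k + 1\<close> columns.\<close>
lemma decomp_tree_if_balanced_flip:
  assumes H: "balanced_flip k W H" and T: "spans_cut T W" "card W \<le> 2*k+1" "T \<noteq> {}"
    and IH: "\<And>T' W'. T' \<subseteq> T \<Longrightarrow> T' \<noteq> {} \<Longrightarrow> spans_cut T' W' \<Longrightarrow> card W' \<le> 2*k \<Longrightarrow>
      \<exists>t. decomp_tree (3*k+1) t \<and> leaves t = T'"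
  shows "\<exists>t. decomp_tree (3*k+1) t \<and> leaves t = T"
proof -
  have kflip: "kflip k V E H" using H by (simp add: balanced_flip_def)
  define comp where "comp x = {y. H\<^sup>*\<^sup>* x y}" for x
  have TV: "T \<subseteq> V" and finT: "finite T"
    using T(1) finite_V by (auto simp: spans_cut_def intro: finite_subset)
  have spans: "\<exists>W'. card W' \<le> card (W \<inter> \<Union>(comp ` X)) + k \<and> spans_cut (T \<inter> \<Union>(comp ` X)) W'"
    if "X \<subseteq> T" for X
    using spans_cut_Int_components[OF kflip T(1)] that TV unfolding comp_def by blast
  define \<K> where "\<K> = (\<lambda>x. T \<inter> comp x) ` T"
  have "\<exists>t. decomp_tree (3*k+1) t \<and> leaves t = \<Union>\<K>"
  proof (rule decomp_tree_Union)
    show "finite \<K>" "\<K> \<noteq> {}" using finT T(3) by (auto simp: \<K>_def)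
    show "disjoint \<K>"
    proof (rule disjointI)
      fix C D assume "C \<in> \<K>" "D \<in> \<K>" "C \<noteq> D"
      then obtain x y where C: "C = T \<inter> comp x" and D: "D = T \<inter> comp y" by (auto simp: \<K>_def)
      have "comp x = comp y" if "z \<in> comp x" "z \<in> comp y" for z
        using that kflip_component_eq[OF kflip] by (simp add: comp_def)
      then show "C \<inter> D = {}" using \<open>C \<noteq> D\<close> C D by blast
    qed
    fix C assume "C \<in> \<K>"
    then obtain x where x: "x \<in> T" "C = T \<inter> comp x" by (auto simp: \<K>_def)
    then obtain W' where "card W' \<le> card (W \<inter> comp x) + k" "spans_cut C W'"
      using spans[of "{x}"] by auto
    moreover have "card (W \<inter> comp x) \<le> k" using H x TV by (auto simp: balanced_flip_def comp_def)
    moreover have "C \<subseteq> T" "C \<noteq> {}" using x by (auto simp: comp_def)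
    ultimately show "\<exists>t. decomp_tree (3*k+1) t \<and> leaves t = C" using IH by simp
  next
    fix \<K>' assume "\<K>' \<subseteq> \<K>" "\<K>' \<noteq> {}"
    then obtain X where X: "X \<subseteq> T" "\<K>' = (\<lambda>x. T \<inter> comp x) ` X"
      unfolding \<K>_def subset_image_iff by blast
    then have "\<Union>\<K>' = T \<inter> \<Union>(comp ` X)" by auto
    moreover obtain W' where "card W' \<le> card (W \<inter> \<Union>(comp ` X)) + k"
      "spans_cut (T \<inter> \<Union>(comp ` X)) W'"
      using spans[OF X(1)] by blast
    moreover have "card (W \<inter> \<Union>(comp ` X)) \<le> card W"
      using T(1) by (intro card_mono) (auto simp: spans_cut_def)
    ultimately show "cutrank E (\<Union>\<K>') (V - \<Union>\<K>') \<le> 3*k+1"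
      using cutrank_le_card_if_spans_cut T(2) by fastforce
  qed
  moreover have "\<Union>\<K> = T" by (auto simp: \<K>_def comp_def)
  ultimately show ?thesis by simp
qed

lemma decomp_tree_if_balanced_flips:
  assumes bal: "\<And>W. W \<subseteq> V \<Longrightarrow> card W = 2*k+1 \<Longrightarrow> \<exists>H. balanced_flip k W H"
  shows "T \<noteq> {} \<Longrightarrow> spans_cut T W \<Longrightarrow> card W \<le> 2*k \<Longrightarrow> \<exists>t. decomp_tree (3*k+1) t \<and> leaves t = T"
proof (induction "card T" arbitrary: T W rule: less_induct)
  case less
  have TV: "T \<subseteq> V" and finT: "finite T"
    using less.prems(2) finite_V by (auto simp: spans_cut_def intro: finite_subset)
  show ?case
  proof (cases "card T = 1")
    case True
    then obtain v where "T = {v}" using card_1_singletonE by blast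
    then show ?thesis using TV by (intro exI[of _ "Leaf v"]) (auto intro: decomp_Leaf)
  next
    case False
    obtain v where v: "v \<in> T" using less.prems(1) by blast
    have "T \<noteq> {v}" using False by auto
    then have T': "T - {v} \<noteq> {}" using v by blast
    have spans: "spans_cut (T - {v}) (insert v W)"
      by (rule spans_cut_Diff_insert[OF less.prems(2) v])
    have card_W': "card (insert v W) \<le> 2*k+1"
      using less.prems(3) card_insert_le_m1[of "2*k+1" W v] by (simp add: card_insert_if split: if_splits)
    have IH: "\<exists>t. decomp_tree (3*k+1) t \<and> leaves t = T'"
      if "T' \<subseteq> T - {v}" "T' \<noteq> {}" "spans_cut T' W'" "card W' \<le> 2*k" for T' W'
    proof -
      have "T' \<subset> T" using that(1) v by blast
      then have "card T' < card T" using finT by (rule psubset_card_mono[rotated])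
      then show ?thesis using less.hyps that(2-) by blast
    qed
    have "\<exists>t'. decomp_tree (3*k+1) t' \<and> leaves t' = T - {v}"
    proof (cases "card (insert v W) \<le> 2*k")
      case True
      then show ?thesis using IH[OF subset_refl T' spans] by blast
    next
      case False
      then have "card (insert v W) = 2*k+1" using card_W' by simp
      moreover have "insert v W \<subseteq> V" using spans by (auto simp: spans_cut_def)
      ultimately obtain H where "balanced_flip k (insert v W) H" using bal by blast
      then show ?thesis
      proof (rule decomp_tree_if_balanced_flip[OF _ spans card_W' T'])
        show "\<exists>t. decomp_tree (3*k+1) t \<and> leaves t = T''"
          if "T'' \<subseteq> T - {v}" "T'' \<noteq> {}" "spans_cut T'' W''" "card W'' \<le> 2*k" for T'' W''
          using IH[OF that] by blast
      qed
    qed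
    then obtain t' where t': "decomp_tree (3*k+1) t'" "leaves t' = T - {v}" by blast
    have "cutrank E T (V - T) \<le> 3*k+1"
      using cutrank_le_card_if_spans_cut[OF less.prems(2)] less.prems(3) by simp
    then have "decomp_tree (3*k+1) (Node t' (Leaf v))"
      using t' v TV by (intro decomp_Node decomp_Leaf) (auto simp: insert_absorb)
    then show ?thesis using t'(2) v by (intro exI[of _ "Node t' (Leaf v)"]) auto
  qed
qed

end

section \<open>The runner's strategy\<close>

lemma not_flipper_wins_if_runner_invariant:
  assumes start: "x0 \<in> V" "I E x0"
    and move: "\<And>H H' x. I H x \<Longrightarrow> kflip k V E H' \<Longrightarrow> \<exists>u. H\<^sup>*\<^sup>* x u \<and> I H' u"
    and not_isolated: "\<And>H x. I H x \<Longrightarrow> \<exists>u. H x u"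
  shows "\<not> flipper_wins k V E"
proof
  assume "flipper_wins k V E"
  then obtain \<sigma> where \<sigma>: "\<And>h. kflip k V E (\<sigma> h)"
    and wins: "\<And>v. v 0 \<in> V \<Longrightarrow> \<forall>j. (stage E \<sigma> v j)\<^sup>*\<^sup>* (v j) (v (Suc j)) \<Longrightarrow>
      \<exists>i\<ge>1. \<not> (\<exists>u. stage E \<sigma> v i (v i) u)"
    unfolding flipper_wins_def by blast
  define current where "current h = (if length h \<le> 1 then E else \<sigma> (butlast h))" for h :: "'a list"
  define reply where "reply h = (SOME u. (current h)\<^sup>*\<^sup>* (last h) u \<and> I (\<sigma> h) u)" for h
  define hist where "hist j = rec_nat [x0] (\<lambda>_ h. h @ [reply h]) j" for j
  define v where "v j = last (hist j)" for j
  have hist_Suc: "hist (Suc j) = hist j @ [reply (hist j)]" for j by (simp add: hist_def)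
  have hist_eq: "hist j = map v [0..<Suc j]" for j
    by (induction j) (simp_all add: hist_def v_def hist_Suc)
  have stage_eq: "stage E \<sigma> v j = current (hist j)" for j
    by (cases j) (simp_all add: stage_def current_def hist_eq butlast_append)
  have reply: "(current (hist j))\<^sup>*\<^sup>* (v j) (v (Suc j)) \<and> I (\<sigma> (hist j)) (v (Suc j))"
    if "I (current (hist j)) (v j)" for j
  proof -
    have "\<exists>u. (current (hist j))\<^sup>*\<^sup>* (last (hist j)) u \<and> I (\<sigma> (hist j)) u"
      using move[OF that \<sigma>] by (simp add: v_def)
    then show ?thesis unfolding v_def hist_Suc last_snoc reply_def by (rule someI_ex)
  qed
  have inv: "I (stage E \<sigma> v j) (v j)" for j
  proof (induction j)
    case 0
    then show ?case using start by (simp add: stage_def v_def hist_def)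
  next
    case (Suc j)
    have "stage E \<sigma> v (Suc j) = \<sigma> (hist j)" by (simp add: stage_def hist_eq)
    then show ?case using reply[of j] Suc.IH by (simp add: stage_eq)
  qed
  have "(stage E \<sigma> v j)\<^sup>*\<^sup>* (v j) (v (Suc j))" for j
    using reply inv by (simp add: stage_eq)
  moreover have "v 0 \<in> V" using start by (simp add: v_def hist_def)
  ultimately obtain i where "\<not> (\<exists>u. stage E \<sigma> v i (v i) u)" using wins by blast
  then show False using not_isolated[OF inv] by blast
qed

context finite_graph
begin

lemma heavy_components_meet:
  assumes "kflip k V E H'" "finite W" "card W = 2*k+1"
    and x: "k < card (W \<inter> {y. H\<^sup>*\<^sup>* x y})" and y: "k < card (W \<inter> {z. H'\<^sup>*\<^sup>* y z})"
  shows "\<exists>u. H\<^sup>*\<^sup>* x u \<and> k < card (W \<inter> {z. H'\<^sup>*\<^sup>* u z})"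
proof -
  let ?A = "W \<inter> {y. H\<^sup>*\<^sup>* x y}" and ?B = "W \<inter> {z. H'\<^sup>*\<^sup>* y z}"
  have "?A \<inter> ?B \<noteq> {}"
  proof
    assume "?A \<inter> ?B = {}"
    then have "card ?A + card ?B \<le> card W"
      using assms(2) by (subst card_Un_disjoint[symmetric]) (auto intro: card_mono)
    then show False using x y assms(3) by simp
  qed
  then obtain u where u: "H\<^sup>*\<^sup>* x u" "H'\<^sup>*\<^sup>* y u" by blast
  then show ?thesis using kflip_component_eq[OF assms(1) u(2)] y by auto
qed

lemma balanced_flip_if_flipper_wins:
  assumes wins: "flipper_wins k V E" and "1 \<le> k" "W \<subseteq> V" "card W = 2*k+1"
  shows "\<exists>H. balanced_flip k W H"
proof (rule ccontr)
  assume unbalanced: "\<nexists>H. balanced_flip k W H"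
  define heavy where "heavy H x \<longleftrightarrow> k < card (W \<inter> {y. H\<^sup>*\<^sup>* x y})" for H x
  have heavy_exists: "\<exists>x\<in>V. heavy H x" if "kflip k V E H" for H
    using unbalanced that by (auto simp: balanced_flip_def heavy_def not_le)
  have finW: "finite W" using assms(3) finite_V finite_subset by blast
  obtain x0 where x0: "x0 \<in> V" "heavy E x0"
    using heavy_exists[OF kflip_self] assms(3,4) \<open>1 \<le> k\<close> by fastforce
  have "\<not> flipper_wins k V E"
  proof (rule not_flipper_wins_if_runner_invariant[where I = heavy, OF x0])
    fix H H' x assume "heavy H x" "kflip k V E H'"
    moreover obtain y where "y \<in> V" "heavy H' y" using heavy_exists[OF \<open>kflip k V E H'\<close>] by blast
    ultimately show "\<exists>u. H\<^sup>*\<^sup>* x u \<and> heavy H' u"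
      using heavy_components_meet[OF _ finW assms(4)] unfolding heavy_def by blast
  next
    fix H x assume "heavy H x"
    then have "\<not> W \<inter> {y. H\<^sup>*\<^sup>* x y} \<subseteq> {x}"
      using \<open>1 \<le> k\<close> card_mono[of "{x}" "W \<inter> {y. H\<^sup>*\<^sup>* x y}"] by (auto simp: heavy_def)
    then obtain y where "H\<^sup>*\<^sup>* x y" "y \<noteq> x" by blast
    then show "\<exists>u. H x u" by (metis converse_rtranclpE)
  qed
  then show False using wins by simp
qed

lemma flipper_wins_0_imp_empty:
  assumes "flipper_wins 0 V E"
  shows "V = {}"
proof -
  obtain \<sigma> where "kflip 0 V E (\<sigma> [])" using assms unfolding flipper_wins_def by blast
  then obtain P where P: "partition_on V P" "card P \<le> 0" unfolding kflip_iff by blast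
  then have "P = {}" using finite_elements[OF finite_V P(1)] by simp
  then show ?thesis using partition_onD1[OF P(1)] by simp
qed

lemma decomp_tree_if_flipper_wins:
  assumes "flipper_wins k V E" "V \<noteq> {}"
  shows "\<exists>t. decomp_tree (3*k+1) t \<and> leaves t = V"
proof -
  have "1 \<le> k" using assms flipper_wins_0_imp_empty by (cases k) auto
  then show ?thesis
    using decomp_tree_if_balanced_flips[OF balanced_flip_if_flipper_wins[OF assms(1)] assms(2) spans_cut_V]
    by simp
qed

end

section \<open>Rank decompositions from decomposition trees\<close>

lemma rtranclp_sym: "(\<And>x y. R x y \<Longrightarrow> R y x) \<Longrightarrow> R\<^sup>*\<^sup>* x y \<Longrightarrow> R\<^sup>*\<^sup>* y x"
  by (metis sympD sympI symp_rtranclp)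

lemma del_edge_commute: "del_edge T x y = del_edge T y x"
  unfolding del_edge_def by (auto simp: insert_commute)

lemma del_edge_sym: "(\<And>a b. T a b \<Longrightarrow> T b a) \<Longrightarrow> del_edge T x y a b \<Longrightarrow> del_edge T x y b a"
  unfolding del_edge_def by (auto simp: insert_commute)

lemma rtranclp_del_edge_cases:
  assumes "T\<^sup>*\<^sup>* x z"
  shows "(del_edge T x y)\<^sup>*\<^sup>* x z \<or> (del_edge T x y)\<^sup>*\<^sup>* y z"
  using assms
proof (induction rule: rtranclp_induct)
  case (step z z')
  show ?case
  proof (cases "{z, z'} = {x, y}")
    case True
    then show ?thesis by (auto simp: doubleton_eq_iff)
  next
    case False
    then have "del_edge T x y z z'" using step(2) by (simp add: del_edge_def)
    then show ?thesis using step(3) by (meson rtranclp.rtrancl_into_rtrancl)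
  qed
qed simp

text \<open>Nodes of a binary tree are numbered as in a heap: the root is \<open>1\<close> and the children
  of \<open>n\<close> are \<open>2 n\<close> and \<open>2 n + 1\<close>.\<close>
definition heap_desc :: "nat \<Rightarrow> nat \<Rightarrow> bool" where
  "heap_desc a x \<longleftrightarrow> (\<exists>j. x div 2^j = a)"

lemma heap_desc_refl: "heap_desc a a"
  unfolding heap_desc_def by (rule exI[of _ 0]) simp

lemma heap_desc_le: "heap_desc a x \<Longrightarrow> a \<le> x"
  unfolding heap_desc_def using div_le_dividend by blast

lemma heap_desc_trans: "heap_desc a b \<Longrightarrow> heap_desc b c \<Longrightarrow> heap_desc a c"
  unfolding heap_desc_def by (metis div_mult2_eq power_add)

lemma heap_desc_children: "heap_desc a (2*a)" "heap_desc a (2*a+1)"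
  unfolding heap_desc_def by (rule exI[of _ 1], simp)+

lemma heap_desc_parent:
  assumes "heap_desc c a" "a \<noteq> c"
  shows "heap_desc c (a div 2)"
proof -
  obtain j where j: "a div 2^j = c" using assms(1) unfolding heap_desc_def by blast
  with assms(2) obtain i where "j = Suc i" by (cases j) auto
  then have "(a div 2) div 2^i = c" using j by (simp add: div_mult2_eq)
  then show ?thesis unfolding heap_desc_def by blast
qed

lemma heap_desc_le_half: "heap_desc a x \<Longrightarrow> a \<noteq> x \<Longrightarrow> a \<le> x div 2"
  using heap_desc_parent heap_desc_le by blast

lemma heap_desc_linear: "heap_desc a x \<Longrightarrow> heap_desc b x \<Longrightarrow> heap_desc a b \<or> heap_desc b a"
  unfolding heap_desc_def
  by (metis div_mult2_eq le_add_diff_inverse nat_le_linear power_add)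

lemma heap_desc_siblings: "1 \<le> n \<Longrightarrow> \<not> heap_desc (2*n) (2*n+1)" "\<not> heap_desc (2*n+1) (2*n)"
  using heap_desc_le_half[of "2*n" "2*n+1"] heap_desc_le[of "2*n+1" "2*n"] by auto

fun heap_nodes :: "'a ltree \<Rightarrow> nat \<Rightarrow> nat set" where
  "heap_nodes (Leaf v) n = {n}"
| "heap_nodes (Node a b) n = insert n (heap_nodes a (2*n) \<union> heap_nodes b (2*n+1))"

fun heap_leaves :: "'a ltree \<Rightarrow> nat \<Rightarrow> ('a \<times> nat) set" where
  "heap_leaves (Leaf v) n = {(v, n)}"
| "heap_leaves (Node a b) n = heap_leaves a (2*n) \<union> heap_leaves b (2*n+1)"

fun subtrees :: "'a ltree \<Rightarrow> 'a ltree set" where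
  "subtrees (Leaf v) = {Leaf v}"
| "subtrees (Node a b) = insert (Node a b) (subtrees a \<union> subtrees b)"

lemma finite_heap_nodes: "finite (heap_nodes t n)"
  by (induction t arbitrary: n) auto

lemma root_in_heap_nodes: "n \<in> heap_nodes t n"
  by (cases t) auto

lemma heap_desc_if_in_heap_nodes: "q \<in> heap_nodes t n \<Longrightarrow> heap_desc n q"
proof (induction t arbitrary: n)
  case (Leaf v)
  then show ?case by (simp add: heap_desc_refl)
next
  case (Node a b)
  then show ?case
    using heap_desc_refl heap_desc_children heap_desc_trans by auto blast+
qed

lemma heap_leaf_in_heap_nodes: "(v, m) \<in> heap_leaves t n \<Longrightarrow> m \<in> heap_nodes t n"
  by (induction t arbitrary: n) auto

lemma leaves_eq_heap_leaves: "leaves t = fst ` heap_leaves t n"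
  by (induction t arbitrary: n) (auto simp: image_Un)

lemma heap_nodes_parent: "q \<in> heap_nodes t n \<Longrightarrow> q \<noteq> n \<Longrightarrow> q div 2 \<in> heap_nodes t n"
proof (induction t arbitrary: n q)
  case (Node a b)
  then show ?case by (cases "q = 2*n"; cases "q = 2*n+1") (auto simp: root_in_heap_nodes)
qed simp

lemma heap_nodes_pos: "1 \<le> n \<Longrightarrow> q \<in> heap_nodes t n \<Longrightarrow> 1 \<le> q"
  using heap_desc_if_in_heap_nodes heap_desc_le by fastforce

lemma heap_nodes_children_disjoint:
  assumes "1 \<le> n"
  shows "heap_nodes a (2*n) \<inter> heap_nodes b (2*n+1) = {}"
proof (rule equals0I)
  fix x assume "x \<in> heap_nodes a (2*n) \<inter> heap_nodes b (2*n+1)"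
  then have "heap_desc (2*n) x" "heap_desc (2*n+1) x"
    using heap_desc_if_in_heap_nodes by (blast, blast)
  then have "heap_desc (2*n) (2*n+1) \<or> heap_desc (2*n+1) (2*n)" by (rule heap_desc_linear)
  then show False using heap_desc_siblings(1)[OF assms] heap_desc_siblings(2) by blast
qed

lemma heap_desc_sibling_subtree:
  assumes "1 \<le> n" "{c, c'} = {2*n, 2*n+1}" "heap_desc c q" "x \<in> heap_nodes t c'"
  shows "\<not> heap_desc q x"
proof
  assume "heap_desc q x"
  then have "heap_desc c x" "heap_desc c' x"
    using assms(3,4) heap_desc_trans heap_desc_if_in_heap_nodes by blast+
  then have "heap_desc c c' \<or> heap_desc c' c" by (rule heap_desc_linear)
  then show False
    using assms(2) heap_desc_siblings(1)[OF assms(1)] heap_desc_siblings(2)[of n]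
    by (auto simp: doubleton_eq_iff)
qed

lemma heap_nodes_subtree:
  "q \<in> heap_nodes t n \<Longrightarrow> 1 \<le> n \<Longrightarrow> \<exists>s\<in>subtrees t.
     heap_nodes s q = {x \<in> heap_nodes t n. heap_desc q x} \<and>
     heap_leaves s q = {(v, m) \<in> heap_leaves t n. heap_desc q m}"
proof (induction t arbitrary: n q)
  case (Leaf v)
  then show ?case by (auto simp: heap_desc_refl)
next
  case (Node a b)
  have n: "1 \<le> n" using Node.prems by simp
  show ?case
  proof (cases "q = n")
    case True
    have "heap_nodes (Node a b) q = {x \<in> heap_nodes (Node a b) n. heap_desc q x}"
      using True heap_desc_if_in_heap_nodes[of _ "Node a b" n] by blast
    moreover have "heap_leaves (Node a b) q = {(v, m) \<in> heap_leaves (Node a b) n. heap_desc q m}"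
      using True heap_desc_if_in_heap_nodes[of _ "Node a b" n] heap_leaf_in_heap_nodes[of _ _ "Node a b" n]
      by blast
    ultimately show ?thesis by auto
  next
    case False
    then consider "q \<in> heap_nodes a (2*n)" | "q \<in> heap_nodes b (2*n+1)" using Node.prems by auto
    then obtain s c c' where s: "s \<in> subtrees (Node a b)" "{c, c'} = {2*n, 2*n+1}" "heap_desc c q"
      "heap_nodes s q = {x \<in> heap_nodes a (2*n) \<union> heap_nodes b (2*n+1). heap_desc q x}"
      "heap_leaves s q = {(v, m) \<in> heap_leaves (Node a b) n. heap_desc q m}"
    proof cases
      case 1
      then obtain s where "s \<in> subtrees a" "heap_nodes s q = {x \<in> heap_nodes a (2*n). heap_desc q x}"
        "heap_leaves s q = {(v, m) \<in> heap_leaves a (2*n). heap_desc q m}"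
        using Node.IH(1) n by fastforce
      moreover have "\<not> heap_desc q x" if "x \<in> heap_nodes b (2*n+1)" for x
        using heap_desc_sibling_subtree[OF n _ _ that] heap_desc_if_in_heap_nodes[OF 1] by blast
      ultimately show ?thesis
        using that[of s "2*n" "2*n+1"] heap_desc_if_in_heap_nodes[OF 1] heap_leaf_in_heap_nodes
        by fastforce
    next
      case 2
      then obtain s where "s \<in> subtrees b" "heap_nodes s q = {x \<in> heap_nodes b (2*n+1). heap_desc q x}"
        "heap_leaves s q = {(v, m) \<in> heap_leaves b (2*n+1). heap_desc q m}"
        using Node.IH(2) n by fastforce
      moreover have "\<not> heap_desc q x" if "x \<in> heap_nodes a (2*n)" for x
        using heap_desc_sibling_subtree[OF n _ _ that] heap_desc_if_in_heap_nodes[OF 2] by blast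
      ultimately show ?thesis
        using that[of s "2*n+1" "2*n"] heap_desc_if_in_heap_nodes[OF 2] heap_leaf_in_heap_nodes
        by fastforce
    qed
    moreover have "\<not> heap_desc q n"
      using s(2,3) heap_desc_trans heap_desc_le n by (fastforce simp: doubleton_eq_iff)
    ultimately show ?thesis by auto
  qed
qed

locale heap_tree =
  fixes N :: "nat set"
  assumes finite_N: "finite N" and one_in_N: "1 \<in> N" and N_pos: "\<And>q. q \<in> N \<Longrightarrow> 1 \<le> q"
    and N_parent: "\<And>q. q \<in> N \<Longrightarrow> q \<noteq> 1 \<Longrightarrow> q div 2 \<in> N"
begin

definition heap_edge :: "nat \<Rightarrow> nat \<Rightarrow> bool" where
  "heap_edge m n \<longleftrightarrow> m \<in> N \<and> n \<in> N \<and> (m = n div 2 \<or> n = m div 2)"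

definition below :: "nat \<Rightarrow> nat set" where
  "below c = {q \<in> N. heap_desc c q}"

lemma heap_edge_commute: "heap_edge m n \<longleftrightarrow> heap_edge n m"
  unfolding heap_edge_def by auto

lemma heap_edge_in_N: "heap_edge m n \<Longrightarrow> m \<in> N \<and> n \<in> N"
  unfolding heap_edge_def by simp

lemma heap_edge_cases: "heap_edge u w \<Longrightarrow> (u \<noteq> 1 \<and> w = u div 2) \<or> (w \<noteq> 1 \<and> u = w div 2)"
  unfolding heap_edge_def using N_pos[of 0] by auto

lemma graph_heap_edge: "graph N heap_edge"
  unfolding graph_def heap_edge_def using finite_N N_pos by fastforce

lemma rtranclp_heap_edge_from_1: "q \<in> N \<Longrightarrow> heap_edge\<^sup>*\<^sup>* 1 q"
proof (induction q rule: less_induct)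
  case (less q)
  show ?case
  proof (cases "q = 1")
    case False
    have p: "q div 2 \<in> N" using N_parent[OF less.prems False] .
    then have "heap_edge\<^sup>*\<^sup>* 1 (q div 2)" using less.IH N_pos[OF less.prems] by simp
    moreover have "heap_edge (q div 2) q" using p less.prems by (simp add: heap_edge_def)
    ultimately show ?thesis by (rule rtranclp.rtrancl_into_rtrancl)
  qed simp
qed

lemma heap_edge_connected: "x \<in> N \<Longrightarrow> y \<in> N \<Longrightarrow> heap_edge\<^sup>*\<^sup>* x y"
  using rtranclp_sym[of heap_edge, OF _ rtranclp_heap_edge_from_1] heap_edge_commute
  by (metis rtranclp_heap_edge_from_1 rtranclp_trans)

context
  fixes c assumes c: "c \<in> N" "c \<noteq> 1"
begin

lemma parent_in_N: "c div 2 \<in> N"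
  using N_parent[OF c] .

lemma parent_less: "c div 2 < c"
  using N_pos[OF c(1)] by simp

lemma reach_child_imp_below: "(del_edge heap_edge c (c div 2))\<^sup>*\<^sup>* c q \<Longrightarrow> q \<in> below c"
proof (induction rule: rtranclp_induct)
  case base
  then show ?case using c heap_desc_refl by (simp add: below_def)
next
  case (step q q')
  have e: "heap_edge q q'" "{q, q'} \<noteq> {c, c div 2}" using step(2) by (auto simp: del_edge_def)
  have "heap_desc c q" using step(3) by (simp add: below_def)
  moreover have "heap_desc q q' \<or> (q' = q div 2 \<and> q \<noteq> c)"
    using e unfolding heap_edge_def heap_desc_def by (metis One_nat_def power_one_right)
  ultimately have "heap_desc c q'" using heap_desc_trans heap_desc_parent by blast
  then show ?case using heap_edge_in_N[OF e(1)] by (simp add: below_def)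
qed

lemma below_imp_reach_child: "q \<in> below c \<Longrightarrow> (del_edge heap_edge c (c div 2))\<^sup>*\<^sup>* c q"
proof (induction q rule: less_induct)
  case (less q)
  have qN: "q \<in> N" and dq: "heap_desc c q" using less.prems by (auto simp: below_def)
  show ?case
  proof (cases "q = c")
    case False
    have cq: "c \<le> q div 2" using heap_desc_le_half[OF dq] False by simp
    then have p: "q div 2 \<in> N" using N_parent[OF qN] N_pos[OF c(1)] c(2) by fastforce
    have "heap_desc c (q div 2)" using heap_desc_parent[OF dq] False by simp
    then have "(del_edge heap_edge c (c div 2))\<^sup>*\<^sup>* c (q div 2)"
      using less.IH N_pos[OF qN] p by (simp add: below_def)
    moreover have "del_edge heap_edge c (c div 2) (q div 2) q"
      using p qN False cq parent_less by (auto simp: del_edge_def heap_edge_def doubleton_eq_iff)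
    ultimately show ?thesis by (rule rtranclp.rtrancl_into_rtrancl)
  qed simp
qed

lemma reach_child_iff: "(del_edge heap_edge c (c div 2))\<^sup>*\<^sup>* c q \<longleftrightarrow> q \<in> below c"
  using reach_child_imp_below below_imp_reach_child by blast

lemma reach_parent_iff: "(del_edge heap_edge c (c div 2))\<^sup>*\<^sup>* (c div 2) q \<longleftrightarrow> q \<in> N - below c"
proof
  assume r: "(del_edge heap_edge c (c div 2))\<^sup>*\<^sup>* (c div 2) q"
  have "q \<in> N"
    using r parent_in_N by (cases rule: rtranclp.cases) (auto simp: del_edge_def heap_edge_def)
  moreover have "q \<notin> below c"
  proof
    assume "q \<in> below c"
    moreover have "(del_edge heap_edge c (c div 2))\<^sup>*\<^sup>* q (c div 2)"
      using rtranclp_sym[OF del_edge_sym r] heap_edge_commute by blast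
    ultimately have "c div 2 \<in> below c" using reach_child_iff rtranclp_trans by metis
    then show False using heap_desc_le parent_less by (fastforce simp: below_def)
  qed
  ultimately show "q \<in> N - below c" by simp
next
  assume q: "q \<in> N - below c"
  then have "heap_edge\<^sup>*\<^sup>* c q" by (simp add: heap_edge_connected c(1))
  then have "(del_edge heap_edge c (c div 2))\<^sup>*\<^sup>* c q \<or> (del_edge heap_edge c (c div 2))\<^sup>*\<^sup>* (c div 2) q"
    by (rule rtranclp_del_edge_cases)
  then show "(del_edge heap_edge c (c div 2))\<^sup>*\<^sup>* (c div 2) q"
    using q reach_child_iff by blast
qed

end

lemma heap_edge_bridge: "heap_edge x y \<Longrightarrow> \<not> (del_edge heap_edge x y)\<^sup>*\<^sup>* x y"
proof
  assume e: "heap_edge x y" and r: "(del_edge heap_edge x y)\<^sup>*\<^sup>* x y"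
  have xN: "x \<in> N" and yN: "y \<in> N" using heap_edge_in_N[OF e] by auto
  from heap_edge_cases[OF e] show False
  proof
    assume a: "x \<noteq> 1 \<and> y = x div 2"
    then have "heap_desc x y" using reach_child_iff[OF xN] r by (simp add: below_def)
    then show False using heap_desc_le parent_less[OF xN] a by fastforce
  next
    assume a: "y \<noteq> 1 \<and> x = y div 2"
    then have "y \<in> N - below y" using r reach_parent_iff[OF yN] del_edge_commute[of heap_edge x y] by simp
    then show False using heap_desc_refl yN by (simp add: below_def)
  qed
qed

lemma is_tree_heap_edge: "is_tree N heap_edge"
  unfolding is_tree_def using finite_N one_in_N graph_heap_edge heap_edge_connected heap_edge_bridge
  by blast

end

context finite_graph
begin

lemma decomp_tree_subtrees: "decomp_tree K t \<Longrightarrow> s \<in> subtrees t \<Longrightarrow> decomp_tree K s"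
proof (induction t rule: decomp_tree.induct)
  case (decomp_Leaf v)
  then show ?case by (auto intro: decomp_tree.decomp_Leaf)
next
  case (decomp_Node a b)
  then show ?case using decomp_tree.decomp_Node[OF decomp_Node(1-4)] by auto
qed

lemma decomp_tree_cutrank: "decomp_tree K s \<Longrightarrow> 1 \<le> K \<Longrightarrow> cutrank E (leaves s) (V - leaves s) \<le> K"
proof (induction s rule: decomp_tree.induct)
  case (decomp_Leaf v)
  then show ?case using cutrank_le_card[of "{v}" E "V - {v}"] by simp
qed simp

lemma decomp_tree_heap_leaves_unique:
  "decomp_tree K t \<Longrightarrow> (v, m) \<in> heap_leaves t n \<Longrightarrow> (v, m') \<in> heap_leaves t n \<Longrightarrow> m = m'"
proof (induction t arbitrary: n rule: decomp_tree.induct)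
  case (decomp_Node a b)
  have "v \<in> leaves a" if "(v, x) \<in> heap_leaves a (2*n)" for x
    using that leaves_eq_heap_leaves[of a "2*n"] by force
  moreover have "v \<in> leaves b" if "(v, x) \<in> heap_leaves b (2*n+1)" for x
    using that leaves_eq_heap_leaves[of b "2*n+1"] by force
  ultimately show ?case using decomp_Node by auto
qed simp

lemma heap_leaves_inj: "1 \<le> n \<Longrightarrow> (v, m) \<in> heap_leaves t n \<Longrightarrow> (v', m) \<in> heap_leaves t n \<Longrightarrow> v = v'"
proof (induction t arbitrary: n)
  case (Node a b)
  have n: "1 \<le> 2*n" "1 \<le> 2*n+1" using Node.prems(1) by auto
  have disj: "heap_nodes a (2*n) \<inter> heap_nodes b (2*n+1) = {}"
    using heap_nodes_children_disjoint Node.prems(1) by blast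
  from Node.prems(2) consider "(v, m) \<in> heap_leaves a (2*n)" | "(v, m) \<in> heap_leaves b (2*n+1)" by auto
  then show ?case
  proof cases
    case 1
    then have "(v', m) \<in> heap_leaves a (2*n)"
      using Node.prems(3) disj heap_leaf_in_heap_nodes[of _ m a] heap_leaf_in_heap_nodes[of v' m b] by auto
    then show ?thesis using Node.IH(1)[OF n(1) 1] by blast
  next
    case 2
    then have "(v', m) \<in> heap_leaves b (2*n+1)"
      using Node.prems(3) disj heap_leaf_in_heap_nodes[of _ m b] heap_leaf_in_heap_nodes[of v' m a] by auto
    then show ?thesis using Node.IH(2)[OF n(2) 2] by blast
  qed
qed simp

end

locale heap_numbered_decomp = finite_graph +
  fixes K :: nat and t :: "'a ltree"
  assumes decomp: "decomp_tree K t" and leaves_t: "leaves t = V" and K_pos: "1 \<le> K"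
    and not_leaf: "t \<notin> range Leaf"
begin

definition nodes :: "nat set" where
  "nodes = heap_nodes t 1"

definition leaf_pos :: "'a \<Rightarrow> nat" where
  "leaf_pos v = (THE m. (v, m) \<in> heap_leaves t 1)"

sublocale heap_tree nodes
proof
  show "finite nodes" "1 \<in> nodes" by (simp_all add: nodes_def finite_heap_nodes root_in_heap_nodes)
  show "1 \<le> q" if "q \<in> nodes" for q using heap_nodes_pos[of 1 q t] that by (simp add: nodes_def)
  show "q div 2 \<in> nodes" if "q \<in> nodes" "q \<noteq> 1" for q
    using heap_nodes_parent[of q t 1] that by (simp add: nodes_def)
qed

lemma heap_leaf_in_V: "(v, m) \<in> heap_leaves t 1 \<Longrightarrow> v \<in> V"
  using leaves_t leaves_eq_heap_leaves[of t 1] by force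

lemma leaf_pos_eq: "(v, m) \<in> heap_leaves t 1 \<Longrightarrow> leaf_pos v = m"
  unfolding leaf_pos_def using decomp_tree_heap_leaves_unique[OF decomp] by blast

lemma leaf_pos_mem: "v \<in> V \<Longrightarrow> (v, leaf_pos v) \<in> heap_leaves t 1"
  using leaves_t leaves_eq_heap_leaves[of t 1] leaf_pos_eq by force

lemma leaf_pos_in_nodes: "v \<in> V \<Longrightarrow> leaf_pos v \<in> nodes"
  unfolding nodes_def by (rule heap_leaf_in_heap_nodes[OF leaf_pos_mem])

lemma subtree_below:
  assumes "q \<in> nodes"
  obtains s where "s \<in> subtrees t" "heap_nodes s q = {x \<in> nodes. heap_desc q x}"
    "heap_leaves s q = {(v, m) \<in> heap_leaves t 1. heap_desc q m}"
proof -
  from heap_nodes_subtree[of q t 1] assms obtain s where "s \<in> subtrees t"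
    "heap_nodes s q = {x \<in> nodes. heap_desc q x}"
    "heap_leaves s q = {(v, m) \<in> heap_leaves t 1. heap_desc q m}"
    by (auto simp: nodes_def)
  then show ?thesis by (rule that)
qed

lemma leaves_eq_below:
  assumes "heap_leaves s q = {(v, m) \<in> heap_leaves t 1. heap_desc q m}"
  shows "leaves s = {v\<in>V. heap_desc q (leaf_pos v)}"
proof -
  have "leaves s = fst ` heap_leaves s q" by (rule leaves_eq_heap_leaves)
  also have "\<dots> = {v\<in>V. heap_desc q (leaf_pos v)}"
  proof
    show "fst ` heap_leaves s q \<subseteq> {v\<in>V. heap_desc q (leaf_pos v)}"
      using assms heap_leaf_in_V leaf_pos_eq by force
    show "{v\<in>V. heap_desc q (leaf_pos v)} \<subseteq> fst ` heap_leaves s q"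
    proof
      fix v assume "v \<in> {v\<in>V. heap_desc q (leaf_pos v)}"
      then have "(v, leaf_pos v) \<in> heap_leaves s q" using assms leaf_pos_mem by auto
      then show "v \<in> fst ` heap_leaves s q" by force
    qed
  qed
  finally show ?thesis .
qed

lemma heap_edge_iff:
  "q \<in> nodes \<Longrightarrow> heap_edge q y \<longleftrightarrow> y \<in> nodes \<and> (y = q div 2 \<or> y = 2*q \<or> y = 2*q+1)"
  unfolding heap_edge_def by auto

lemma tdeg_le_3: "q \<in> nodes \<Longrightarrow> tdeg heap_edge q \<le> 3"
proof -
  assume "q \<in> nodes"
  then have "{y. heap_edge q y} \<subseteq> {q div 2, 2*q, 2*q+1}" using heap_edge_iff by auto
  then have "tdeg heap_edge q \<le> card {q div 2, 2*q, 2*q+1}" unfolding tdeg_def by (intro card_mono) auto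
  also have "\<dots> \<le> 3" by (simp add: card_insert_if)
  finally show ?thesis .
qed

lemma tdeg_eq_1_iff:
  assumes "q \<in> nodes"
  shows "tdeg heap_edge q = 1 \<longleftrightarrow> (\<exists>v. (v, q) \<in> heap_leaves t 1)"
proof -
  obtain s where "s \<in> subtrees t" and s: "heap_nodes s q = {x \<in> nodes. heap_desc q x}"
      "heap_leaves s q = {(v, m) \<in> heap_leaves t 1. heap_desc q m}"
    by (rule subtree_below[OF assms])
  have q: "1 \<le> q" using N_pos assms by blast
  show ?thesis
  proof (cases s)
    case (Leaf v)
    then have below_q: "{x \<in> nodes. heap_desc q x} = {q}" using s(1) by simp
    then have not_in_nodes: "x \<notin> nodes" if "heap_desc q x" "x \<noteq> q" for x using that by blast
    then have "2*q \<notin> nodes" "2*q+1 \<notin> nodes" using heap_desc_children[of q] q by auto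
    moreover have "q \<noteq> 1"
    proof
      assume "q = 1"
      obtain a b where "t = Node a b" using not_leaf by (cases t) auto
      then have "2 \<in> nodes" unfolding nodes_def by (simp add: root_in_heap_nodes)
      then show False using not_in_nodes[of 2] heap_desc_children(1)[of 1] \<open>q = 1\<close> by simp
    qed
    ultimately have "{y. heap_edge q y} = {q div 2}"
      using heap_edge_iff[OF assms] N_parent[OF assms] by auto
    moreover have "(v, q) \<in> heap_leaves t 1" using s(2) Leaf heap_desc_refl by auto
    ultimately show ?thesis by (auto simp: tdeg_def)
  next
    case (Node a b)
    then have "{2*q, 2*q+1} \<subseteq> {y. heap_edge q y}"
      using s(1) heap_edge_iff[OF assms] root_in_heap_nodes by auto
    moreover have "finite {y. heap_edge q y}"
      using finite_N heap_edge_in_N by (auto intro: finite_subset[of _ nodes])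
    ultimately have "card {2*q, 2*q+1} \<le> tdeg heap_edge q"
      unfolding tdeg_def by (intro card_mono)
    then have "2 \<le> tdeg heap_edge q" by simp
    moreover have "(v, q) \<notin> heap_leaves t 1" for v
    proof
      assume "(v, q) \<in> heap_leaves t 1"
      then have "(v, q) \<in> heap_leaves s q" using s(2) heap_desc_refl by auto
      then have "q \<in> heap_nodes a (2*q) \<or> q \<in> heap_nodes b (2*q+1)"
        using Node heap_leaf_in_heap_nodes by fastforce
      then show False using heap_desc_if_in_heap_nodes heap_desc_le q by fastforce
    qed
    ultimately show ?thesis by auto
  qed
qed

lemma bij_leaf_pos: "bij_betw leaf_pos V {x\<in>nodes. tdeg heap_edge x = 1}"
proof (rule bij_betw_imageI)
  show "inj_on leaf_pos V"
  proof (rule inj_onI)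
    fix v w assume "v \<in> V" "w \<in> V" "leaf_pos v = leaf_pos w"
    then have "(v, leaf_pos v) \<in> heap_leaves t 1" "(w, leaf_pos v) \<in> heap_leaves t 1"
      using leaf_pos_mem by metis+
    then show "v = w" by (rule heap_leaves_inj[rotated]) simp
  qed
  show "leaf_pos ` V = {x\<in>nodes. tdeg heap_edge x = 1}"
  proof safe
    fix v assume "v \<in> V"
    then show "leaf_pos v \<in> nodes" "tdeg heap_edge (leaf_pos v) = 1"
      using leaf_pos_in_nodes tdeg_eq_1_iff leaf_pos_mem by blast+
  next
    fix q assume "q \<in> nodes" "tdeg heap_edge q = 1"
    then obtain v where "(v, q) \<in> heap_leaves t 1" using tdeg_eq_1_iff by blast
    then show "q \<in> leaf_pos ` V" using heap_leaf_in_V leaf_pos_eq by force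
  qed
qed

text \<open>The two sides of the tree edge between \<open>c\<close> and its parent are the leaves below \<open>c\<close>
  and the rest.\<close>
lemma cutrank_heap_edge:
  assumes "heap_edge u w"
  shows "cutrank E {v\<in>V. (del_edge heap_edge u w)\<^sup>*\<^sup>* u (leaf_pos v)}
    (V - {v\<in>V. (del_edge heap_edge u w)\<^sup>*\<^sup>* u (leaf_pos v)}) \<le> K"
    (is "cutrank E ?A (V - ?A) \<le> K")
proof -
  obtain c where c: "c \<in> nodes" "c \<noteq> 1" "{u, w} = {c, c div 2}"
  proof -
    from heap_edge_cases[OF assms] show thesis
    proof
      assume "u \<noteq> 1 \<and> w = u div 2"
      then show thesis using that[of u] heap_edge_in_N[OF assms] by auto
    next
      assume "w \<noteq> 1 \<and> u = w div 2"
      then show thesis using that[of w] heap_edge_in_N[OF assms] by (auto simp: insert_commute)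
    qed
  qed
  obtain s where s: "s \<in> subtrees t" "heap_nodes s c = {x \<in> nodes. heap_desc c x}"
    "heap_leaves s c = {(v, m) \<in> heap_leaves t 1. heap_desc c m}"
    by (rule subtree_below[OF c(1)])
  have cut: "cutrank E (leaves s) (V - leaves s) \<le> K"
    using decomp_tree_cutrank[OF decomp_tree_subtrees[OF decomp s(1)] K_pos] .
  have below: "{v\<in>V. leaf_pos v \<in> below c} = leaves s"
    using leaves_eq_below[OF s(3)] leaf_pos_in_nodes by (auto simp: below_def)
  show ?thesis
  proof (cases "u = c")
    case True
    then have "?A = leaves s"
      using c(3) reach_child_iff[OF c(1,2)] below by (auto simp: doubleton_eq_iff)
    then show ?thesis using cut by simp
  next
    case False
    then have "u = c div 2" "del_edge heap_edge u w = del_edge heap_edge c (c div 2)"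
      using c(3) del_edge_commute by (auto simp: doubleton_eq_iff)
    then have "?A = V - leaves s"
      using reach_parent_iff[OF c(1,2)] below leaf_pos_in_nodes by auto
    moreover have "leaves s \<subseteq> V" using leaves_eq_below[OF s(3)] by blast
    ultimately have "cutrank E ?A (V - ?A) = cutrank E (leaves s) (V - leaves s)"
      using finite_V symp_E cutrank_commute[of "leaves s" "V - leaves s" E]
      by (simp add: double_diff finite_subset)
    then show ?thesis using cut by simp
  qed
qed

lemma rank_decomp_heap: "rank_decomp V E K nodes heap_edge leaf_pos"
  unfolding rank_decomp_def Let_def
  using is_tree_heap_edge tdeg_le_3 bij_leaf_pos cutrank_heap_edge by blast

end

lemma (in finite_graph) rank_decomp_if_decomp_tree:
  assumes "decomp_tree K t" "leaves t = V" "1 \<le> K" "t \<notin> range Leaf"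
  shows "\<exists>N T L. rank_decomp V E K N T L"
proof -
  interpret heap_numbered_decomp V E K t
    using assms by unfold_locales
  show ?thesis using rank_decomp_heap by blast
qed

section \<open>A flipper strategy from a rank decomposition\<close>

locale rank_decomposition = finite_graph +
  fixes r :: nat and N :: "nat set" and T :: "nat \<Rightarrow> nat \<Rightarrow> bool" and L :: "'a \<Rightarrow> nat"
  assumes rank_decomp: "rank_decomp V E r N T L"
begin

lemma is_tree: "is_tree N T"
  using rank_decomp by (simp add: rank_decomp_def)

lemma finite_N: "finite N"
  using is_tree by (simp add: is_tree_def)

lemma T_in_N: "T a b \<Longrightarrow> a \<in> N \<and> b \<in> N"
  using is_tree by (simp add: is_tree_def graph_def)

lemma T_commute: "T a b \<longleftrightarrow> T b a"
  using is_tree unfolding is_tree_def graph_def by blast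

lemma T_irrefl: "\<not> T a a"
  using is_tree unfolding is_tree_def graph_def by blast

lemma T_bridge: "T x y \<Longrightarrow> \<not> (del_edge T x y)\<^sup>*\<^sup>* x y"
  using is_tree by (simp add: is_tree_def)

lemma L_in_N: "v \<in> V \<Longrightarrow> L v \<in> N"
  using rank_decomp unfolding rank_decomp_def bij_betw_def by blast

lemma L_inj: "v \<in> V \<Longrightarrow> w \<in> V \<Longrightarrow> L v = L w \<Longrightarrow> v = w"
  using rank_decomp unfolding rank_decomp_def bij_betw_def inj_on_def by blast

definition avoid :: "nat \<Rightarrow> nat \<Rightarrow> nat \<Rightarrow> bool" where
  "avoid x a b \<longleftrightarrow> T a b \<and> a \<noteq> x \<and> b \<noteq> x"

definition branch :: "nat \<Rightarrow> nat \<Rightarrow> nat set" where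
  "branch x y = {b. (avoid x)\<^sup>*\<^sup>* y b}"

lemma avoid_commute: "avoid x a b \<Longrightarrow> avoid x b a"
  unfolding avoid_def using T_commute by blast

lemma rtranclp_avoid_ne: "(avoid x)\<^sup>*\<^sup>* a b \<Longrightarrow> a \<noteq> x \<Longrightarrow> b \<noteq> x"
  by (induction rule: rtranclp_induct) (auto simp: avoid_def)

lemma avoid_imp_del_edge: "(avoid x)\<^sup>*\<^sup>* y b \<Longrightarrow> (del_edge T y x)\<^sup>*\<^sup>* y b"
  by (erule mono_rtranclp[rule_format, rotated]) (auto simp: avoid_def del_edge_def doubleton_eq_iff)

lemma del_edge_imp_avoid:
  assumes "T x y" "(del_edge T y x)\<^sup>*\<^sup>* y b"
  shows "(avoid x)\<^sup>*\<^sup>* y b"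
  using assms(2)
proof (induction rule: rtranclp_induct)
  case (step c b)
  have "b \<noteq> x"
  proof
    assume "b = x"
    then have "(del_edge T y x)\<^sup>*\<^sup>* y x" using step(1,2) by simp
    then show False using T_bridge assms(1) T_commute by blast
  qed
  moreover have "c \<noteq> x" using step(3) rtranclp_avoid_ne assms(1) T_irrefl by blast
  ultimately have "avoid x c b" using step(2) by (auto simp: avoid_def del_edge_def)
  then show ?case by (rule rtranclp.rtrancl_into_rtrancl[OF step(3)])
qed simp

lemma branch_eq_side: "T x y \<Longrightarrow> branch x y = {b. (del_edge T y x)\<^sup>*\<^sup>* y b}"
  unfolding branch_def using del_edge_imp_avoid avoid_imp_del_edge by blast

lemma center_notin_branch: "T x y \<Longrightarrow> b \<in> branch x y \<Longrightarrow> b \<noteq> x"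
  unfolding branch_def using rtranclp_avoid_ne T_irrefl by blast

lemma branch_subset_N:
  assumes "T x y"
  shows "branch x y \<subseteq> N"
proof
  fix b assume "b \<in> branch x y"
  then have "(avoid x)\<^sup>*\<^sup>* y b" by (simp add: branch_def)
  then show "b \<in> N"
    using T_in_N[OF assms] by (induction rule: rtranclp_induct) (auto simp: avoid_def dest: T_in_N)
qed

lemma branches_disjoint:
  assumes "T x y" "T x y'" "y \<noteq> y'" "b \<in> branch x y" "b \<in> branch x y'"
  shows False
proof -
  have "(avoid x)\<^sup>*\<^sup>* y b" "(avoid x)\<^sup>*\<^sup>* y' b" using assms(4,5) by (auto simp: branch_def)
  then have "(avoid x)\<^sup>*\<^sup>* y y'"
    using rtranclp_sym[of "avoid x", OF avoid_commute] by (meson rtranclp_trans)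
  then have "(del_edge T y x)\<^sup>*\<^sup>* y y'" by (rule avoid_imp_del_edge)
  moreover have "del_edge T y x y' x"
    using assms(2,3) T_commute T_irrefl by (auto simp: del_edge_def doubleton_eq_iff)
  ultimately have "(del_edge T y x)\<^sup>*\<^sup>* y x" by (rule rtranclp.rtrancl_into_rtrancl)
  then show False using T_bridge assms(1) T_commute by blast
qed

lemma opposite_branches_disjoint:
  assumes "T x y" "b \<in> branch x y" "b \<in> branch y x"
  shows False
proof -
  have yb: "(del_edge T y x)\<^sup>*\<^sup>* y b" using assms(2) avoid_imp_del_edge by (simp add: branch_def)
  have "(del_edge T x y)\<^sup>*\<^sup>* x b" using assms(3) avoid_imp_del_edge by (simp add: branch_def)
  moreover have "del_edge T x y a c \<Longrightarrow> del_edge T x y c a" for a c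
    by (rule del_edge_sym) (simp add: T_commute)
  ultimately have "(del_edge T x y)\<^sup>*\<^sup>* b x" using rtranclp_sym[of "del_edge T x y"] by blast
  then have "(del_edge T y x)\<^sup>*\<^sup>* b x" by (simp add: del_edge_commute[of T x y])
  with yb have "(del_edge T y x)\<^sup>*\<^sup>* y x" by (rule rtranclp_trans)
  then show False using T_bridge assms(1) T_commute by blast
qed

lemma rtranclp_avoid_cases:
  assumes "T\<^sup>*\<^sup>* a b" "b \<noteq> x"
  shows "(avoid x)\<^sup>*\<^sup>* a b \<or> (\<exists>y. T x y \<and> (avoid x)\<^sup>*\<^sup>* y b)"
  using assms
proof (induction rule: rtranclp_induct)
  case (step c b)
  show ?case
  proof (cases "c = x")
    case True
    then show ?thesis using step(2) by auto
  next
    case False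
    then have "avoid x c b" using step(2,4) by (simp add: avoid_def)
    then show ?thesis using step(3)[OF False] by (meson rtranclp.rtrancl_into_rtrancl)
  qed
qed simp

lemma branch_cover:
  assumes "x \<in> N" "b \<in> N" "b \<noteq> x"
  shows "\<exists>y. T x y \<and> b \<in> branch x y"
proof -
  have "T\<^sup>*\<^sup>* x b" using is_tree assms(1,2) by (simp add: is_tree_def)
  then have "(avoid x)\<^sup>*\<^sup>* x b \<or> (\<exists>y. T x y \<and> (avoid x)\<^sup>*\<^sup>* y b)"
    using rtranclp_avoid_cases assms(3) by blast
  moreover have "\<not> (avoid x)\<^sup>*\<^sup>* x b"
    using assms(3) by (auto elim: converse_rtranclpE simp: avoid_def)
  ultimately show ?thesis by (auto simp: branch_def)
qed

lemma branch_psubset: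
  assumes "T x y" "T y y'" "y' \<noteq> x"
  shows "branch y y' \<subset> branch x y"
proof
  show "branch y y' \<subseteq> branch x y"
  proof
    fix b assume "b \<in> branch y y'"
    then have "(avoid y)\<^sup>*\<^sup>* y' b" by (simp add: branch_def)
    then have "(del_edge T y x)\<^sup>*\<^sup>* y' b"
      by (rule mono_rtranclp[rule_format, rotated]) (auto simp: avoid_def del_edge_def doubleton_eq_iff)
    moreover have "del_edge T y x y y'"
      using assms(2,3) T_irrefl by (auto simp: del_edge_def doubleton_eq_iff)
    ultimately have "(del_edge T y x)\<^sup>*\<^sup>* y b" by (rule converse_rtranclp_into_rtranclp[rotated])
    then show "b \<in> branch x y" using branch_eq_side[OF assms(1)] by simp
  qed
  have "y \<notin> branch y y'" using center_notin_branch[OF assms(2)] by blast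
  then show "branch y y' \<noteq> branch x y" by (auto simp: branch_def)
qed

text \<open>The branches entered along such a walk strictly decrease.\<close>
lemma no_infinite_nonbacktracking_walk:
  assumes walk: "\<And>i. T (x i) (x (Suc i))" and no_return: "\<And>i. x (Suc (Suc i)) \<noteq> x i"
  shows False
proof -
  define f where "f i = card (branch (x i) (x (Suc i)))" for i
  have decreasing: "f (Suc i) < f i" for i
    unfolding f_def
    using branch_psubset[OF walk walk no_return] branch_subset_N[OF walk] finite_N
    by (meson psubset_card_mono finite_subset)
  have "f i + i \<le> f 0" for i
  proof (induction i)
    case (Suc i)
    then show ?case using decreasing[of i] by simp
  qed simp
  from this[of "Suc (f 0)"] show False by simp
qed

end

lemma partition_on_fibres: "partition_on A ((\<lambda>a. {x\<in>A. f x = f a}) ` A)"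
  by (rule partition_onI) (auto simp: disjnt_def)

lemma card_fibres_le: "finite A \<Longrightarrow> card ((\<lambda>a. {x\<in>A. f x = f a}) ` A) \<le> card (f ` A)"
proof -
  assume "finite A"
  have "(\<lambda>a. {x\<in>A. f x = f a}) ` A = (\<lambda>y. {x\<in>A. f x = y}) ` (f ` A)" by auto
  then show ?thesis using \<open>finite A\<close> by (simp add: card_image_le)
qed

context rank_decomposition
begin

text \<open>The flipper sits on a node \<open>x\<close>. A vertex \<open>v\<close> whose leaf is not \<open>x\<close> lies in the
  branch at \<open>x\<close> towards \<open>L v\<close>; its side consists of all vertices with leaves in that branch.\<close>
definition toward :: "nat \<Rightarrow> 'a \<Rightarrow> nat" where
  "toward x v = (if \<exists>y. T x y \<and> L v \<in> branch x y then SOME y. T x y \<and> L v \<in> branch x y else x)"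

definition side :: "nat \<Rightarrow> 'a \<Rightarrow> 'a set" where
  "side x v = (if L v = x then {v} else {w\<in>V. L w \<in> branch x (toward x v)})"

definition side_key :: "nat \<Rightarrow> 'a \<Rightarrow> 'a set \<times> 'a set" where
  "side_key x v = (side x v, {b \<in> V - side x v. E v b})"

definition side_class :: "nat \<Rightarrow> 'a \<Rightarrow> 'a set" where
  "side_class x v = {w\<in>V. side_key x w = side_key x v}"

definition cross_adjacent :: "nat \<Rightarrow> 'a set \<Rightarrow> 'a set \<Rightarrow> bool" where
  "cross_adjacent x X Y \<longleftrightarrow> (\<exists>a\<in>X. \<exists>b\<in>Y. E a b \<and> side x a \<noteq> side x b)"

definition side_flip :: "nat \<Rightarrow> 'a \<Rightarrow> 'a \<Rightarrow> bool" where
  "side_flip x = flipped V E (side_class x ` V) (cross_adjacent x)"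

lemma toward:
  assumes "x \<in> N" "v \<in> V" "L v \<noteq> x"
  shows "T x (toward x v)" "L v \<in> branch x (toward x v)"
proof -
  have ex: "\<exists>y. T x y \<and> L v \<in> branch x y" using branch_cover[OF assms(1) L_in_N[OF assms(2)] assms(3)] .
  then show "T x (toward x v)" "L v \<in> branch x (toward x v)"
    using someI_ex[OF ex] by (simp_all add: toward_def)
qed

lemma toward_in_N: "x \<in> N \<Longrightarrow> toward x v \<in> N"
  using someI_ex[of "\<lambda>y. T x y \<and> L v \<in> branch x y"] T_in_N by (auto simp: toward_def)

lemma side_subset_V: "v \<in> V \<Longrightarrow> side x v \<subseteq> V"
  by (auto simp: side_def)

context
  fixes x assumes x: "x \<in> N"
begin

lemma in_side: "v \<in> V \<Longrightarrow> v \<in> side x v"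
  using toward[OF x] by (auto simp: side_def)

lemma side_eq:
  assumes v: "v \<in> V" and w: "w \<in> side x v"
  shows "side x w = side x v"
proof (cases "L v = x")
  case True
  then show ?thesis using w by (simp add: side_def)
next
  case False
  let ?y = "toward x v"
  have y: "T x ?y" "L v \<in> branch x ?y" using toward[OF x v False] by auto
  have wS: "w \<in> V" "L w \<in> branch x ?y" using w False by (auto simp: side_def)
  have Lw: "L w \<noteq> x" using center_notin_branch[OF y(1) wS(2)] .
  have "toward x w = ?y"
  proof (rule ccontr)
    assume "toward x w \<noteq> ?y"
    then show False
      using branches_disjoint[OF y(1) toward(1)[OF x wS(1) Lw] _ wS(2) toward(2)[OF x wS(1) Lw]] by simp
  qed
  then show ?thesis using Lw False by (simp add: side_def)
qed

lemma card_sides: "card (side x ` V) \<le> 3"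
proof -
  have finT: "finite {y. T x y}" using finite_N T_in_N by (auto intro: finite_subset[of _ N])
  have "side x ` V \<subseteq> (\<lambda>v. {v}) ` {v\<in>V. L v = x} \<union> (\<lambda>y. {w\<in>V. L w \<in> branch x y}) ` {y. T x y}"
    using toward(1)[OF x] by (auto simp: side_def)
  then have "card (side x ` V)
      \<le> card ((\<lambda>v. {v}) ` {v\<in>V. L v = x} \<union> (\<lambda>y. {w\<in>V. L w \<in> branch x y}) ` {y. T x y})"
    using finite_V finT by (intro card_mono) auto
  also have "\<dots> \<le> card {v\<in>V. L v = x} + tdeg T x"
    unfolding tdeg_def using finite_V finT by (intro card_Un_le[THEN order_trans] add_mono card_image_le) auto
  also have "\<dots> \<le> 3"
  proof (cases "tdeg T x = 1")
    case True
    have "card {v\<in>V. L v = x} \<le> 1"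
      using L_inj finite_V by (auto simp: card_le_Suc0_iff_eq)
    then show ?thesis using True by simp
  next
    case False
    then have no_leaf: "{v\<in>V. L v = x} = {}" and "tdeg T x \<le> 3"
      using rank_decomp x unfolding rank_decomp_def bij_betw_def by auto
    then show ?thesis unfolding no_leaf by simp
  qed
  finally show ?thesis .
qed

text \<open>Sides are the leaf sets of cuts of the decomposition, so their vertices have at most
  \<open>2 ^ r\<close> distinct neighbourhoods outside.\<close>
lemma card_side_rows:
  assumes v: "v \<in> V"
  shows "card ((\<lambda>a. {b \<in> V - side x v. E a b}) ` side x v) \<le> 2^r"
proof (cases "L v = x")
  case True
  then show ?thesis by (simp add: side_def)
next
  case False
  let ?y = "toward x v"
  have y: "T x ?y" using toward[OF x v False] by auto
  have "side x v = {w\<in>V. (del_edge T ?y x)\<^sup>*\<^sup>* ?y (L w)}"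
    using False branch_eq_side[OF y] by (simp add: side_def)
  moreover have "T ?y x" using y T_commute by simp
  ultimately have "cutrank E (side x v) (V - side x v) \<le> r"
    using rank_decomp unfolding rank_decomp_def Let_def by metis
  moreover have "finite (side x v)" using side_subset_V[OF v] finite_V finite_subset by blast
  ultimately show ?thesis
    using card_rows_le_pow_cutrank[of "side x v" "V - side x v" E] power_increasing[of _ r "2::nat"]
    by (meson le_trans one_le_numeral)
qed

lemma card_side_classes: "card (side_class x ` V) \<le> 3 * 2^r"
proof -
  define rows where "rows p = (\<lambda>a. {b \<in> V - p. E a b}) ` p" for p
  have fin_rows: "finite (rows p)" if "p \<in> side x ` V" for p
    using that side_subset_V finite_V by (auto simp: rows_def intro: finite_subset)
  have "card (side_class x ` V) \<le> card (side_key x ` V)"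
    unfolding side_class_def using card_fibres_le[OF finite_V] .
  also have "\<dots> \<le> card (Sigma (side x ` V) rows)"
    using in_side fin_rows finite_V by (intro card_mono) (auto simp: side_key_def rows_def)
  also have "\<dots> = (\<Sum>p\<in>side x ` V. card (rows p))"
    using fin_rows finite_V by (simp add: card_SigmaI)
  also have "\<dots> \<le> (\<Sum>p\<in>side x ` V. 2^r)"
    by (rule sum_mono) (use card_side_rows in \<open>auto simp: rows_def\<close>)
  also have "\<dots> \<le> 3 * 2^r" using card_sides by simp
  finally show ?thesis .
qed

lemma side_key_adjacency:
  assumes "a \<in> V" "a' \<in> V" "b \<in> V" "b' \<in> V" "side_key x a = side_key x a'" "side_key x b = side_key x b'"
    and "side x a \<noteq> side x b"
  shows "E a b = E a' b'"
proof -
  have sides: "side x a' = side x a" "side x b' = side x b" using assms(5,6) by (auto simp: side_key_def)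
  have "b \<notin> side x a" "a' \<notin> side x b" using side_eq assms(1,3,7) sides by metis+
  moreover have "{c \<in> V - side x a. E a c} = {c \<in> V - side x a. E a' c}"
    "{c \<in> V - side x b. E b c} = {c \<in> V - side x b. E b' c}"
    using assms(5,6) sides by (simp_all add: side_key_def)
  ultimately have "E a b = E a' b" "E b a' = E b' a'" using assms(2,3) by blast+
  then show ?thesis using E_commute by metis
qed

lemma side_class_eq: "w \<in> side_class x v \<Longrightarrow> side_class x w = side_class x v"
  by (auto simp: side_class_def)

lemma side_flip_iff:
  assumes a: "a \<in> V" and b: "b \<in> V"
  shows "side_flip x a b \<longleftrightarrow> a \<noteq> b \<and> E a b \<and> side x a = side x b"
proof -
  have "(\<exists>X\<in>side_class x ` V. \<exists>Y\<in>side_class x ` V. a \<in> X \<and> b \<in> Y \<and> cross_adjacent x X Y)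
      \<longleftrightarrow> side x a \<noteq> side x b \<and> E a b" (is "?flip \<longleftrightarrow> _")
  proof
    assume ?flip
    then obtain c d where "a \<in> side_class x c" "b \<in> side_class x d"
      "cross_adjacent x (side_class x c) (side_class x d)"
      by blast
    then have "cross_adjacent x (side_class x a) (side_class x b)"
      by (simp add: side_class_eq)
    then obtain a' b' where "a' \<in> side_class x a" "b' \<in> side_class x b" "E a' b'" "side x a' \<noteq> side x b'"
      unfolding cross_adjacent_def by blast
    then have "a' \<in> V" "b' \<in> V" "side_key x a = side_key x a'" "side_key x b = side_key x b'"
      "side x a \<noteq> side x b" "E a' b'"
      by (auto simp: side_class_def side_key_def)
    then show "side x a \<noteq> side x b \<and> E a b" using side_key_adjacency[OF a _ b] by blast
  next
    assume "side x a \<noteq> side x b \<and> E a b"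
    then have "cross_adjacent x (side_class x a) (side_class x b)"
      using a b unfolding cross_adjacent_def side_class_def by blast
    then show ?flip using a b by (auto simp: side_class_def)
  qed
  then show ?thesis using a b unfolding side_flip_def flipped_def by auto
qed

lemma kflip_side_flip: "kflip (3 * 2^r) V E (side_flip x)"
  unfolding kflip_iff side_flip_def
proof (intro exI[of _ "side_class x ` V"] exI[of _ "cross_adjacent x"] conjI allI)
  show "partition_on V (side_class x ` V)"
    unfolding side_class_def by (rule partition_on_fibres)
  show "card (side_class x ` V) \<le> 3 * 2^r" by (rule card_side_classes)
  show "cross_adjacent x X Y = cross_adjacent x Y X" for X Y
    unfolding cross_adjacent_def using E_commute by blast
qed simp

lemma side_flip_in_V: "side_flip x a b \<Longrightarrow> a \<in> V \<and> b \<in> V"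
  by (simp add: side_flip_def flipped_def)

lemma side_flip_rtranclp: "(side_flip x)\<^sup>*\<^sup>* a b \<Longrightarrow> a \<in> V \<Longrightarrow> side x b = side x a \<and> b \<in> V"
proof (induction rule: rtranclp_induct)
  case (step y z)
  then have "y \<in> V" "z \<in> V" using side_flip_in_V by blast+
  then show ?case using step side_flip_iff by auto
qed simp

lemma side_flip_confined:
  assumes "v \<in> V" "L v \<noteq> x" "(side_flip x)\<^sup>*\<^sup>* v v'"
  shows "L v' \<in> branch x (toward x v)"
proof -
  have "side x v' = side x v" "v' \<in> V" using side_flip_rtranclp[OF assms(3,1)] by auto
  then show ?thesis using in_side[of v'] assms(2) by (simp add: side_def)
qed

lemma side_flip_leaf_isolated:
  assumes "v \<in> V" "L v = x"
  shows "\<not> side_flip x v u"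
proof
  assume flip: "side_flip x v u"
  then have "u \<in> V" using side_flip_in_V by blast
  then have "u \<in> side x v" using flip side_flip_iff assms(1) in_side by metis
  then show False using flip assms side_flip_iff[OF assms(1) \<open>u \<in> V\<close>] by (simp add: side_def)
qed

end

end

context rank_decomposition
begin

definition start_node :: nat where
  "start_node = (SOME x. x \<in> N)"

text \<open>The node for the history \<open>[v\<^sub>0, \<dots>, v\<^sub>i\<^sub>-\<^sub>1]\<close>: start anywhere and step towards the
  leaf of each position after the initial choice \<open>v\<^sub>0\<close>.\<close>
definition node_after :: "'a list \<Rightarrow> nat" where
  "node_after h = fold (\<lambda>v x. toward x v) (tl h) start_node"

lemma node_after_in_N: "node_after h \<in> N"
proof -
  have "start_node \<in> N"
    using is_tree unfolding start_node_def is_tree_def by (simp add: some_in_eq)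
  moreover have "x \<in> N \<Longrightarrow> fold (\<lambda>v x. toward x v) xs x \<in> N" for xs x
    by (induction xs arbitrary: x) (auto simp: toward_in_N)
  ultimately show ?thesis by (simp add: node_after_def)
qed

text \<open>A runner that is never isolated never sits on the leaf at the current node, so it
  stays in the branch just entered and the nodes form an infinite walk that never turns back.\<close>
theorem flipper_wins_side_flips: "flipper_wins (3 * 2^r) V E"
  unfolding flipper_wins_def
proof (intro exI[of _ "\<lambda>h. side_flip (node_after h)"] conjI allI impI)
  show "kflip (3 * 2^r) V E (side_flip (node_after h))" for h
    using kflip_side_flip node_after_in_N by blast
  fix v :: "nat \<Rightarrow> 'a"
  let ?G = "stage E (\<lambda>h. side_flip (node_after h)) v"
  assume play: "v 0 \<in> V \<and> (\<forall>j. (?G j)\<^sup>*\<^sup>* (v j) (v (Suc j)))"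
  show "\<exists>i\<ge>1. \<not> (\<exists>u. ?G i (v i) u)"
  proof (rule ccontr)
    assume "\<not> ?thesis"
    then have not_isolated: "\<exists>u. ?G i (v i) u" if "1 \<le> i" for i using that by auto
    define x where "x i = node_after (map v [0..<i])" for i
    have x_in_N: "x i \<in> N" for i unfolding x_def by (rule node_after_in_N)
    have x_Suc: "x (Suc i) = toward (x i) (v i)" if "1 \<le> i" for i
      using that by (simp add: x_def node_after_def tl_append2)
    have G: "?G i = side_flip (x i)" if "1 \<le> i" for i
      using that by (simp add: stage_def x_def)
    have moves: "(side_flip (x i))\<^sup>*\<^sup>* (v i) (v (Suc i))" if "1 \<le> i" for i
      using play G[OF that] by metis
    have v_in_V: "v i \<in> V" for i
    proof (induction i)
      case (Suc i)
      have "(?G i)\<^sup>*\<^sup>* (v i) (v (Suc i))" using play by blast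
      then show ?case
        using Suc.IH rtranclp_E_in_V side_flip_rtranclp[OF x_in_N moves] G
        by (cases "i = 0") (auto simp: stage_def)
    qed (use play in simp)
    have not_leaf: "L (v i) \<noteq> x i" if "1 \<le> i" for i
      using not_isolated[OF that] side_flip_leaf_isolated[OF x_in_N v_in_V] G[OF that] by auto
    have step: "T (x i) (x (Suc i))" "L (v i) \<in> branch (x i) (x (Suc i))" if "1 \<le> i" for i
      using toward[OF x_in_N v_in_V not_leaf[OF that]] x_Suc[OF that] by simp_all
    have stays: "L (v (Suc i)) \<in> branch (x i) (x (Suc i))" if "1 \<le> i" for i
      using side_flip_confined[OF x_in_N v_in_V not_leaf[OF that] moves[OF that]] x_Suc[OF that] by simp
    have no_return: "x (Suc (Suc (Suc i))) \<noteq> x (Suc i)" for i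
    proof
      assume "x (Suc (Suc (Suc i))) = x (Suc i)"
      then show False
        using opposite_branches_disjoint[OF step(1)] step(2)[of "Suc (Suc i)"] stays[of "Suc i"] by auto
    qed
    show False
      by (rule no_infinite_nonbacktracking_walk[of "\<lambda>i. x (Suc i)"]) (use step(1) no_return in auto)
  qed
qed

end

context finite_graph
begin

lemma flipper_wins_card: "flipper_wins (card V) V E"
  unfolding flipper_wins_def
proof (intro exI[of _ "\<lambda>_ _ _. False"] conjI allI impI kflip_discrete)
  show "\<exists>i\<ge>1. \<not> (\<exists>u. stage E (\<lambda>_ _ _. False) v i (v i) u)" for v :: "nat \<Rightarrow> 'a"
    by (rule exI[of _ 1]) (simp add: stage_def)
qed

lemma flipper_wins_fw: "flipper_wins (fw V E) V E"
  unfolding fw_def by (rule LeastI[where P = "\<lambda>k. flipper_wins k V E", OF flipper_wins_card])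

lemma fw_le: "flipper_wins k V E \<Longrightarrow> fw V E \<le> k"
  unfolding fw_def by (rule Least_le)

lemma rank_decomp_if_flipper_wins:
  assumes "flipper_wins k V E" "\<not> card V \<le> 1"
  shows "\<exists>N T L. rank_decomp V E (3*k+1) N T L"
proof -
  obtain t where t: "decomp_tree (3*k+1) t" "leaves t = V"
    using decomp_tree_if_flipper_wins[OF assms(1)] assms(2) by fastforce
  moreover have "t \<notin> range Leaf" using t(2) assms(2) by auto
  ultimately show ?thesis using rank_decomp_if_decomp_tree by simp
qed

lemma rw_le_fw: "rw V E \<le> 3 * fw V E + 1"
proof (cases "card V \<le> 1")
  case False
  then obtain N T L where "rank_decomp V E (3 * fw V E + 1) N T L"
    using rank_decomp_if_flipper_wins[OF flipper_wins_fw] by blast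
  then have "(LEAST k. \<exists>N T L. rank_decomp V E k N T L) \<le> 3 * fw V E + 1"
    by (intro Least_le) blast
  then show ?thesis using False by (simp add: rw_def)
qed (simp add: rw_def)

lemma fw_le_rw: "fw V E \<le> 3 * 2 ^ rw V E"
proof (cases "card V \<le> 1")
  case True
  then have "fw V E \<le> card V" using fw_le[OF flipper_wins_card] by simp
  then show ?thesis using True by (simp add: rw_def)
next
  case False
  have "\<exists>k N T L. rank_decomp V E k N T L"
    using rank_decomp_if_flipper_wins[OF flipper_wins_fw False] by blast
  then have "\<exists>N T L. rank_decomp V E (LEAST k. \<exists>N T L. rank_decomp V E k N T L) N T L"
    by (rule LeastI_ex)
  then obtain N T L where "rank_decomp V E (rw V E) N T L" using False by (auto simp: rw_def)
  then interpret rank_decomposition V E "rw V E" N T L by unfold_locales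
  show ?thesis by (rule fw_le[OF flipper_wins_side_flips])
qed

end

lemma rw_fw_bounds:
  assumes "graph V E"
  shows "rw V E \<le> 3 * fw V E + 1" "fw V E \<le> 3 * 2 ^ rw V E"
  using finite_graph.rw_le_fw finite_graph.fw_le_rw assms by (auto simp: finite_graph_def)

theorem mainTheorem5:
  "(\<exists>C::real. \<forall>(V::nat set) E. graph V E \<longrightarrow>
       rw V E \<le> 3 * fw V E + 1 \<and>
       real (3 * fw V E + 1) \<le> C * 2 ^ rw V E + C)
   \<and> (\<forall>\<C> :: (nat set \<times> (nat \<Rightarrow> nat \<Rightarrow> bool)) set.
       (\<forall>G\<in>\<C>. graph (fst G) (snd G)) \<longrightarrow>
       ((\<exists>k. \<forall>G\<in>\<C>. rw (fst G) (snd G) \<le> k) \<longleftrightarrow> (\<exists>k. \<forall>G\<in>\<C>. fw (fst G) (snd G) \<le> k)))"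
proof (intro conjI allI impI)
  show "\<exists>C::real. \<forall>(V::nat set) E. graph V E \<longrightarrow>
      rw V E \<le> 3 * fw V E + 1 \<and> real (3 * fw V E + 1) \<le> C * 2 ^ rw V E + C"
  proof (intro exI[of _ 9] allI impI conjI)
    fix V :: "nat set" and E assume G: "graph V E"
    then show "rw V E \<le> 3 * fw V E + 1" by (rule rw_fw_bounds)
    have "3 * fw V E + 1 \<le> 9 * 2 ^ rw V E + 9" using rw_fw_bounds(2)[OF G] by simp
    then have "real (3 * fw V E + 1) \<le> real (9 * 2 ^ rw V E + 9)" by (simp only: of_nat_le_iff)
    then show "real (3 * fw V E + 1) \<le> 9 * 2 ^ rw V E + 9" by simp
  qed
  fix \<C> :: "(nat set \<times> (nat \<Rightarrow> nat \<Rightarrow> bool)) set"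
  assume "\<forall>G\<in>\<C>. graph (fst G) (snd G)"
  then have bounds: "rw (fst G) (snd G) \<le> 3 * fw (fst G) (snd G) + 1"
    "fw (fst G) (snd G) \<le> 3 * 2 ^ rw (fst G) (snd G)" if "G \<in> \<C>" for G
    using rw_fw_bounds that by blast+
  show "(\<exists>k. \<forall>G\<in>\<C>. rw (fst G) (snd G) \<le> k) \<longleftrightarrow> (\<exists>k. \<forall>G\<in>\<C>. fw (fst G) (snd G) \<le> k)"
  proof
    assume "\<exists>k. \<forall>G\<in>\<C>. rw (fst G) (snd G) \<le> k"
    then obtain k where "\<forall>G\<in>\<C>. rw (fst G) (snd G) \<le> k" by blast
    then have "\<forall>G\<in>\<C>. fw (fst G) (snd G) \<le> 3 * 2 ^ k"
      using bounds(2) power_increasing[of _ k "2::nat"] by (meson le_trans mult_le_mono2 one_le_numeral)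
    then show "\<exists>k. \<forall>G\<in>\<C>. fw (fst G) (snd G) \<le> k" by blast
  next
    assume "\<exists>k. \<forall>G\<in>\<C>. fw (fst G) (snd G) \<le> k"
    then obtain k where "\<forall>G\<in>\<C>. fw (fst G) (snd G) \<le> k" by blast
    then have "\<forall>G\<in>\<C>. rw (fst G) (snd G) \<le> 3 * k + 1" using bounds(1) by fastforce
    then show "\<exists>k. \<forall>G\<in>\<C>. rw (fst G) (snd G) \<le> k" by blast
  qed
qed

end
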